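(* Let $A=KQ/I$ be a gentle tree algebra over an algebraically closed field $K$ whose quiver $Q$ has underlying graph $\mathbb{A}_n$ (with arbitrary orientation). If $\mathrm{rad}^2 A=0$, then the trivial extension $T(A)=A\ltimes DA$ is a Brauer line algebra.
   Context: $D=\mathrm{Hom}_K(-,K)$; $T(A)$ has underlying space $A\oplus DA$ with multiplication $(a,f)(b,g)=(ab,ag+fb)$. Gentle: every vertex of $Q$ has at most two incoming and at most two outgoing arrows; for each arrow $\alpha$ there is at most one arrow $\beta$ with $\alpha\beta\in I$, at most one $\gamma$ with $\gamma\alpha\in I$, at most one $\beta'$ with $\alpha\beta'\notin I$ and at most one $\gamma'$ with $\gamma'\alpha\notin I$ (composable arrows); $I$ is admissible and generated by paths of length 2; gentle tree means $Q$ is a tree. $\mathbb{A}_n$ is the path graph with $n$ vertices. A Brauer line algebra with $n$ edges is the Brauer graph algebra (all multiplicities $1$) of the path graph with $n$ edges; concretely it is $KQ'/I'$ with $Q'$: vertices $1,\dots,n$, arrows $\alpha_i:i\to i+1$ and $\beta_i:i+1\to i$ for $1\le i\le n-1$, and $I'=\langle \alpha_i\alpha_{i+1},\ \beta_{i+1}\beta_i,\ \beta_i\alpha_i-\alpha_{i+1}\beta_{i+1}\mid 1\le i\le n-2\rangle$. *)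

theory Defs
  imports "HOL-Computational_Algebra.Polynomial"
begin

definition alg_closed :: "'k::field itself \<Rightarrow> bool" where
  "alg_closed _ = (\<forall>p::'k poly. degree p > 0 \<longrightarrow> (\<exists>x. poly p x = 0))"

record ('k, 'a) kalg =
  acarr :: "'a set"
  aadd  :: "'a \<Rightarrow> 'a \<Rightarrow> 'a"
  azero :: "'a"
  asmul :: "'k \<Rightarrow> 'a \<Rightarrow> 'a"
  amul  :: "'a \<Rightarrow> 'a \<Rightarrow> 'a"
  aone  :: "'a"

definition asub :: "('k::field, 'a) kalg \<Rightarrow> 'a \<Rightarrow> 'a \<Rightarrow> 'a" where
  "asub A x y = aadd A x (asmul A (-1) y)"

definition alg_iso :: "('k, 'a) kalg \<Rightarrow> ('k, 'b) kalg \<Rightarrow> ('a \<Rightarrow> 'b) \<Rightarrow> bool" where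
  "alg_iso A B f \<longleftrightarrow> bij_betw f (acarr A) (acarr B)
     \<and> (\<forall>x\<in>acarr A. \<forall>y\<in>acarr A. f (aadd A x y) = aadd B (f x) (f y))
     \<and> (\<forall>c. \<forall>x\<in>acarr A. f (asmul A c x) = asmul B c (f x))
     \<and> (\<forall>x\<in>acarr A. \<forall>y\<in>acarr A. f (amul A x y) = amul B (f x) (f y))
     \<and> f (aone A) = aone B"

definition alg_isomorphic :: "('k, 'a) kalg \<Rightarrow> ('k, 'b) kalg \<Rightarrow> bool" where
  "alg_isomorphic A B \<longleftrightarrow> (\<exists>f. alg_iso A B f)"

definition is_ideal :: "('k::field, 'a) kalg \<Rightarrow> 'a set \<Rightarrow> bool" where
  "is_ideal A J \<longleftrightarrow> J \<subseteq> acarr A \<and> azero A \<in> J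
     \<and> (\<forall>x\<in>J. \<forall>y\<in>J. aadd A x y \<in> J)
     \<and> (\<forall>c. \<forall>x\<in>J. asmul A c x \<in> J)
     \<and> (\<forall>a\<in>acarr A. \<forall>x\<in>J. amul A a x \<in> J \<and> amul A x a \<in> J)"

definition gen_ideal :: "('k::field, 'a) kalg \<Rightarrow> 'a set \<Rightarrow> 'a set" where
  "gen_ideal A S = \<Inter>{J. is_ideal A J \<and> S \<subseteq> J}"

definition qcoset :: "('k::field, 'a) kalg \<Rightarrow> 'a set \<Rightarrow> 'a \<Rightarrow> 'a set" where
  "qcoset A J x = {y \<in> acarr A. asub A y x \<in> J}"

definition qrep :: "'a set \<Rightarrow> 'a" where
  "qrep X = (SOME x. x \<in> X)"

definition quot_alg :: "('k::field, 'a) kalg \<Rightarrow> 'a set \<Rightarrow> ('k, 'a set) kalg" where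
  "quot_alg A J = \<lparr> acarr = qcoset A J ` acarr A,
      aadd = (\<lambda>X Y. qcoset A J (aadd A (qrep X) (qrep Y))),
      azero = qcoset A J (azero A),
      asmul = (\<lambda>c X. qcoset A J (asmul A c (qrep X))),
      amul = (\<lambda>X Y. qcoset A J (amul A (qrep X) (qrep Y))),
      aone = qcoset A J (aone A) \<rparr>"

definition jrad :: "('k::field, 'a) kalg \<Rightarrow> 'a set" where
  "jrad A = {x \<in> acarr A. \<forall>y\<in>acarr A. \<exists>z\<in>acarr A.
       amul A z (asub A (aone A) (amul A y x)) = aone A
     \<and> amul A (asub A (aone A) (amul A y x)) z = aone A}"

text \<open>rad^2 A = 0 (rad^2 A is spanned by the products of two radical elements).\<close>
definition rad_sq_zero :: "('k::field, 'a) kalg \<Rightarrow> bool" where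
  "rad_sq_zero A \<longleftrightarrow> (\<forall>x\<in>jrad A. \<forall>y\<in>jrad A. amul A x y = azero A)"

definition kdual :: "('k::field, 'a) kalg \<Rightarrow> ('a \<Rightarrow> 'k) set" where
  "kdual A = {f. (\<forall>x. x \<notin> acarr A \<longrightarrow> f x = 0)
     \<and> (\<forall>x\<in>acarr A. \<forall>y\<in>acarr A. f (aadd A x y) = f x + f y)
     \<and> (\<forall>c. \<forall>x\<in>acarr A. f (asmul A c x) = c * f x)}"

text \<open>(a,f)(b,g) = (ab, ag + fb) where (a g)(x) = g(x a) and (f b)(x) = f(b x).\<close>
definition triv_ext :: "('k::field, 'a) kalg \<Rightarrow> ('k, 'a \<times> ('a \<Rightarrow> 'k)) kalg" where
  "triv_ext A = \<lparr> acarr = acarr A \<times> kdual A,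
      aadd = (\<lambda>(a, f) (b, g). (aadd A a b, \<lambda>x. f x + g x)),
      azero = (azero A, \<lambda>x. 0),
      asmul = (\<lambda>c (a, f). (asmul A c a, \<lambda>x. c * f x)),
      amul = (\<lambda>(a, f) (b, g). (amul A a b,
                 \<lambda>x. if x \<in> acarr A then g (amul A x a) + f (amul A b x) else 0)),
      aone = (aone A, \<lambda>x. 0) \<rparr>"

record ('v, 'e) quiver =
  verts :: "'v set"
  arrs  :: "'e set"
  src   :: "'e \<Rightarrow> 'v"
  tgt   :: "'e \<Rightarrow> 'v"

text \<open>A path is a start vertex together with a list of arrows, composed left to right
  (so the path \<alpha>\<beta> first traverses \<alpha>, then \<beta>). Trivial paths e_v are (v, []).\<close>
definition is_path :: "('v, 'e) quiver \<Rightarrow> 'v \<times> 'e list \<Rightarrow> bool" where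
  "is_path Q p \<longleftrightarrow> fst p \<in> verts Q \<and> set (snd p) \<subseteq> arrs Q
     \<and> (snd p \<noteq> [] \<longrightarrow> src Q (hd (snd p)) = fst p)
     \<and> (\<forall>i. Suc i < length (snd p) \<longrightarrow> tgt Q (snd p ! i) = src Q (snd p ! Suc i))"

definition pend :: "('v, 'e) quiver \<Rightarrow> 'v \<times> 'e list \<Rightarrow> 'v" where
  "pend Q p = (if snd p = [] then fst p else tgt Q (last (snd p)))"

definition path_alg :: "('v, 'e) quiver \<Rightarrow> ('k::field, 'v \<times> 'e list \<Rightarrow> 'k) kalg" where
  "path_alg Q = \<lparr> acarr = {f. (\<forall>p. \<not> is_path Q p \<longrightarrow> f p = 0) \<and> finite {p. f p \<noteq> 0}},
      aadd = (\<lambda>f g p. f p + g p),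
      azero = (\<lambda>p. 0),
      asmul = (\<lambda>c f p. c * f p),
      amul = (\<lambda>f g p. if is_path Q p then
                 (\<Sum>k\<in>{0..length (snd p)}.
                    f (fst p, take k (snd p)) * g (pend Q (fst p, take k (snd p)), drop k (snd p)))
               else 0),
      aone = (\<lambda>p. if is_path Q p \<and> snd p = [] then 1 else 0) \<rparr>"

definition pth :: "'v \<times> 'e list \<Rightarrow> ('v \<times> 'e list \<Rightarrow> 'k::field)" where
  "pth p = (\<lambda>q. if q = p then 1 else 0)"

definition at_most_one :: "'a set \<Rightarrow> bool" where
  "at_most_one S \<longleftrightarrow> (\<forall>x\<in>S. \<forall>y\<in>S. x = y)"

definition gentle :: "('v, 'e) quiver \<Rightarrow> ('v \<times> 'e list \<Rightarrow> 'k::field) set \<Rightarrow> bool" where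
  "gentle Q I \<longleftrightarrow> finite (verts Q) \<and> finite (arrs Q)
   \<and> (\<forall>a\<in>arrs Q. src Q a \<in> verts Q \<and> tgt Q a \<in> verts Q)
   \<and> (\<forall>v\<in>verts Q. card {a\<in>arrs Q. tgt Q a = v} \<le> 2 \<and> card {a\<in>arrs Q. src Q a = v} \<le> 2)
   \<and> (\<forall>a\<in>arrs Q.
        at_most_one {b\<in>arrs Q. tgt Q a = src Q b \<and> pth (src Q a, [a, b]) \<in> I}
      \<and> at_most_one {c\<in>arrs Q. tgt Q c = src Q a \<and> pth (src Q c, [c, a]) \<in> I}
      \<and> at_most_one {b\<in>arrs Q. tgt Q a = src Q b \<and> pth (src Q a, [a, b]) \<notin> I}
      \<and> at_most_one {c\<in>arrs Q. tgt Q c = src Q a \<and> pth (src Q c, [c, a]) \<notin> I})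
   \<and> (\<exists>R. R \<subseteq> {p. is_path Q p \<and> length (snd p) = 2}
        \<and> I = gen_ideal (path_alg Q) (pth ` R))
   \<and> (\<exists>m. \<forall>p. is_path Q p \<and> length (snd p) \<ge> m \<longrightarrow> pth p \<in> I)
   \<and> (\<forall>f\<in>I. \<forall>p. length (snd p) < 2 \<longrightarrow> f p = 0)"

text \<open>A quiver with underlying graph A_n (vertices 1..n), arbitrary orientation:
  arrow i (1 \<le> i < n) joins i and i+1, pointing i \<rightarrow> i+1 iff orient i.\<close>
definition lineQ :: "nat \<Rightarrow> (nat \<Rightarrow> bool) \<Rightarrow> (nat, nat) quiver" where
  "lineQ n orient = \<lparr> verts = {1..n}, arrs = {1..<n},
      src = (\<lambda>i. if orient i then i else Suc i),
      tgt = (\<lambda>i. if orient i then Suc i else i) \<rparr>"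

datatype barr = BA nat | BB nat | BL

text \<open>For n \<ge> 2: arrows \<alpha>_i = BA i : i \<rightarrow> i+1 and \<beta>_i = BB i : i+1 \<rightarrow> i.
  For n = 1 (a single edge, both ends truncated) a loop BL at vertex 1.\<close>
definition brauerQ :: "nat \<Rightarrow> (nat, barr) quiver" where
  "brauerQ n = \<lparr> verts = {1..n},
      arrs = (if n = 1 then {BL} else BA ` {1..<n} \<union> BB ` {1..<n}),
      src = (\<lambda>a. case a of BA i \<Rightarrow> i | BB i \<Rightarrow> Suc i | BL \<Rightarrow> 1),
      tgt = (\<lambda>a. case a of BA i \<Rightarrow> Suc i | BB i \<Rightarrow> i | BL \<Rightarrow> 1) \<rparr>"

definition brauer_rels :: "nat \<Rightarrow> (nat \<times> barr list \<Rightarrow> 'k::field) set" where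
  "brauer_rels n = (if n = 1 then {pth (1, [BL, BL])} else
      (\<Union>i\<in>{1..n-2}. {pth (i, [BA i, BA (Suc i)]),
                      pth (i + 2, [BB (Suc i), BB i]),
                      (\<lambda>p. pth (Suc i, [BB i, BA i]) p - pth (Suc i, [BA (Suc i), BB (Suc i)]) p)})
      \<union> {pth (1, [BA 1, BB 1, BA 1]), pth (n, [BB (n - 1), BA (n - 1), BB (n - 1)])})"

definition brauer_line :: "nat \<Rightarrow> ('k::field, (nat \<times> barr list \<Rightarrow> 'k) set) kalg" where
  "brauer_line n = quot_alg (path_alg (brauerQ n)) (gen_ideal (path_alg (brauerQ n)) (brauer_rels n))"

end

theory Submission
  imports Defs
begin

text \<open>Since rad^2 A = 0, all paths of length two lie in I, so A has the vertices e_i and the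
  arrows as a basis, the only nonzero products being e_s a = a = a e_t. Hence T(A) = A + DA has
  the basis e_i, a, e_i^*, a^*, and the products a a^* and a^* a land in the socle. Sending e_i to the
  idempotent at i, e_i^* to the socle element at i, and each arrow and its dual to alpha and beta
  (according to the orientation of the arrow) matches T(A) with the Brauer line algebra, which
  modulo its relations has the idempotents, the alpha_i, the beta_i and one socle element per
  vertex as a basis. Both quotients of path algebras are identified with algebras of coordinate
  vectors by one criterion: coordinates that are multiplicative, vanish on the ideal, and
  determine every path modulo the ideal.\<close>

subsection \<open>Paths in a quiver\<close>

definition tgt_in_verts :: "('v, 'e) quiver \<Rightarrow> bool" where
  "tgt_in_verts Q \<longleftrightarrow> (\<forall>a\<in>arrs Q. tgt Q a \<in> verts Q)"

lemma is_path_Nil [simp]: "is_path Q (v, []) \<longleftrightarrow> v \<in> verts Q"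
  by (simp add: is_path_def)

lemma is_path_Cons:
  assumes "tgt_in_verts Q"
  shows "is_path Q (v, a # as) \<longleftrightarrow>
    v \<in> verts Q \<and> a \<in> arrs Q \<and> src Q a = v \<and> is_path Q (tgt Q a, as)"
proof
  assume p: "is_path Q (v, a # as)"
  have "tgt Q (as ! i) = src Q (as ! Suc i)" if "Suc i < length as" for i
    using p that unfolding is_path_def by (metis Suc_less_eq length_Cons nth_Cons_Suc snd_conv)
  moreover have "src Q (hd as) = tgt Q a" if "as \<noteq> []"
    using p that unfolding is_path_def
    by (metis hd_conv_nth length_Cons length_greater_0_conv nat.simps(1) not_less_eq
        nth_Cons_0 nth_Cons_Suc snd_conv)
  ultimately show "v \<in> verts Q \<and> a \<in> arrs Q \<and> src Q a = v \<and> is_path Q (tgt Q a, as)"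
    using p assms by (auto simp: is_path_def tgt_in_verts_def)
next
  assume h: "v \<in> verts Q \<and> a \<in> arrs Q \<and> src Q a = v \<and> is_path Q (tgt Q a, as)"
  have "tgt Q ((a # as) ! i) = src Q ((a # as) ! Suc i)" if "Suc i < length (a # as)" for i
    using h that unfolding is_path_def by (cases i) (auto simp: hd_conv_nth)
  then show "is_path Q (v, a # as)"
    using h unfolding is_path_def by auto
qed

lemma pend_Nil [simp]: "pend Q (v, []) = v"
  by (simp add: pend_def)

lemma pend_Cons [simp]: "pend Q (v, a # as) = pend Q (tgt Q a, as)"
  by (simp add: pend_def)

lemma is_path_append:
  "tgt_in_verts Q \<Longrightarrow> is_path Q (v, xs) \<Longrightarrow> is_path Q (pend Q (v, xs), ys) \<Longrightarrow>
    is_path Q (v, xs @ ys)"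
  by (induction xs arbitrary: v) (auto simp: is_path_Cons)

lemma is_path_drop:
  "tgt_in_verts Q \<Longrightarrow> is_path Q (v, xs) \<Longrightarrow> is_path Q (pend Q (v, take k xs), drop k xs)"
  by (induction xs arbitrary: v k) (auto simp: is_path_Cons take_Cons' drop_Cons')

lemma is_path_appendD:
  "tgt_in_verts Q \<Longrightarrow> is_path Q (v, xs @ ys) \<Longrightarrow> is_path Q (v, xs) \<and> is_path Q (pend Q (v, xs), ys)"
proof (induction xs arbitrary: v)
  case Nil
  then show ?case by (simp add: is_path_def)
next
  case (Cons a xs)
  then show ?case by (simp add: is_path_Cons)
qed

subsection \<open>The path algebra\<close>

lemma path_alg_simps [simp]:
  "acarr (path_alg Q) = {f. (\<forall>p. \<not> is_path Q p \<longrightarrow> f p = 0) \<and> finite {p. f p \<noteq> 0}}"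
  "aadd (path_alg Q) = (\<lambda>f g p. f p + g p)"
  "azero (path_alg Q) = (\<lambda>p. 0)"
  "asmul (path_alg Q) = (\<lambda>c f p. c * f p)"
  "aone (path_alg Q) = (\<lambda>p. if is_path Q p \<and> snd p = [] then 1 else 0)"
  by (simp_all add: path_alg_def)

lemma path_alg_mul:
  "amul (path_alg Q) f g p = (if is_path Q p then
     (\<Sum>k\<in>{0..length (snd p)}.
        f (fst p, take k (snd p)) * g (pend Q (fst p, take k (snd p)), drop k (snd p)))
   else 0)"
  by (simp add: path_alg_def)

lemma path_alg_vanish: "f \<in> acarr (path_alg Q) \<Longrightarrow> \<not> is_path Q p \<Longrightarrow> f p = 0"
  by (simp del: split_paired_All)

lemma sum_eq_single_term:
  assumes "finite A" "a \<in> A" "\<And>k. k \<in> A \<Longrightarrow> k \<noteq> a \<Longrightarrow> f k = 0"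
  shows "sum f A = f a"
  using assms sum.mono_neutral_left[of A "{a}" f] by auto

lemma path_alg_add_closed:
  "f \<in> acarr (path_alg Q) \<Longrightarrow> g \<in> acarr (path_alg Q) \<Longrightarrow> (\<lambda>p. f p + g p) \<in> acarr (path_alg Q)"
  by (auto intro: finite_subset[of _ "{p. f p \<noteq> 0} \<union> {p. g p \<noteq> 0}"])

lemma path_alg_smul_closed:
  "f \<in> acarr (path_alg Q) \<Longrightarrow> (\<lambda>p. c * f p) \<in> acarr (path_alg Q)"
  by (auto intro: finite_subset[of _ "{p. f p \<noteq> 0}"])

lemma path_alg_diff_closed:
  "f \<in> acarr (path_alg Q) \<Longrightarrow> g \<in> acarr (path_alg Q) \<Longrightarrow> (\<lambda>p. f p - g p) \<in> acarr (path_alg Q)"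
  using path_alg_add_closed[of f Q "\<lambda>p. (-1) * g p"] path_alg_smul_closed[of g Q "-1"] by simp

lemma path_alg_mul_closed:
  assumes "f \<in> acarr (path_alg Q)" "g \<in> acarr (path_alg Q)"
  shows "amul (path_alg Q) f g \<in> acarr (path_alg Q)"
proof -
  let ?h = "amul (path_alg Q) f g"
  let ?concat = "\<lambda>(q, r). (fst q, snd q @ snd r)"
  have "{p. ?h p \<noteq> 0} \<subseteq> ?concat ` ({q. f q \<noteq> 0} \<times> {r. g r \<noteq> 0})"
  proof
    fix p assume "p \<in> {p. ?h p \<noteq> 0}"
    then have "(\<Sum>k\<in>{0..length (snd p)}.
        f (fst p, take k (snd p)) * g (pend Q (fst p, take k (snd p)), drop k (snd p))) \<noteq> 0"
      by (auto simp: path_alg_mul split: if_splits)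
    then obtain k where
      "f (fst p, take k (snd p)) * g (pend Q (fst p, take k (snd p)), drop k (snd p)) \<noteq> 0"
      by (meson sum.neutral)
    then show "p \<in> ?concat ` ({q. f q \<noteq> 0} \<times> {r. g r \<noteq> 0})"
      by (intro image_eqI[where x = "((fst p, take k (snd p)),
            (pend Q (fst p, take k (snd p)), drop k (snd p)))"]) auto
  qed
  moreover have "finite (?concat ` ({q. f q \<noteq> 0} \<times> {r. g r \<noteq> 0}))"
    using assms by auto
  ultimately have "finite {p. ?h p \<noteq> 0}"
    by (rule finite_subset)
  moreover have "\<forall>p. \<not> is_path Q p \<longrightarrow> ?h p = 0"
    by (simp add: path_alg_mul)
  ultimately show ?thesis by simp
qed

lemma path_alg_one_closed:
  assumes "finite (verts Q)"
  shows "aone (path_alg Q) \<in> acarr (path_alg Q)"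
proof -
  have "{p. is_path Q p \<and> snd p = []} \<subseteq> (\<lambda>v. (v, [])) ` verts Q"
    by (auto simp: image_iff is_path_def)
  then show ?thesis
    using assms by (auto intro: finite_subset)
qed

lemma pth_in_path_alg: "is_path Q p \<Longrightarrow> (pth p :: _ \<Rightarrow> 'k::field) \<in> acarr (path_alg Q)"
  by (auto simp: pth_def intro: finite_subset[of _ "{p}"])

lemma path_alg_mul_add_left:
  "amul (path_alg Q) (\<lambda>p. f p + g p) h = (\<lambda>p. amul (path_alg Q) f h p + amul (path_alg Q) g h p)"
  by (auto simp: path_alg_mul sum.distrib[symmetric] algebra_simps)

lemma path_alg_mul_add_right:
  "amul (path_alg Q) h (\<lambda>p. f p + g p) = (\<lambda>p. amul (path_alg Q) h f p + amul (path_alg Q) h g p)"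
  by (auto simp: path_alg_mul sum.distrib[symmetric] algebra_simps)

lemma path_alg_mul_diff_left:
  "amul (path_alg Q) (\<lambda>p. f p - g p) h = (\<lambda>p. amul (path_alg Q) f h p - amul (path_alg Q) g h p)"
  by (auto simp: path_alg_mul sum_subtractf[symmetric] left_diff_distrib)

lemma path_alg_mul_smul_left:
  "amul (path_alg Q) (\<lambda>p. c * f p) h = (\<lambda>p. c * amul (path_alg Q) f h p)"
  by (auto simp: path_alg_mul sum_distrib_left algebra_simps)

lemma path_alg_mul_smul_right:
  "amul (path_alg Q) h (\<lambda>p. c * f p) = (\<lambda>p. c * amul (path_alg Q) h f p)"
  by (auto simp: path_alg_mul sum_distrib_left algebra_simps)

lemma path_alg_mul_one_left:
  assumes "x \<in> acarr (path_alg Q)"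
  shows "amul (path_alg Q) (aone (path_alg Q)) x = x"
proof
  fix p
  show "amul (path_alg Q) (aone (path_alg Q)) x p = x p"
  proof (cases "is_path Q p")
    case True
    obtain v xs where p: "p = (v, xs)" by (cases p)
    have "v \<in> verts Q" using True p by (simp add: is_path_def)
    have "(\<Sum>k\<in>{0..length xs}. (if is_path Q (v, take k xs) \<and> take k xs = [] then 1 else 0) *
        x (pend Q (v, take k xs), drop k xs)) = x (v, xs)"
      using \<open>v \<in> verts Q\<close> by (subst sum_eq_single_term[where a = 0]) auto
    then show ?thesis
      using True p by (simp add: path_alg_mul)
  qed (use path_alg_vanish[OF assms(1)] in \<open>simp add: path_alg_mul\<close>)
qed

lemma path_alg_mul_one_right:
  assumes "tgt_in_verts Q" "x \<in> acarr (path_alg Q)"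
  shows "amul (path_alg Q) x (aone (path_alg Q)) = x"
proof
  fix p
  show "amul (path_alg Q) x (aone (path_alg Q)) p = x p"
  proof (cases "is_path Q p")
    case True
    obtain v xs where p: "p = (v, xs)" by (cases p)
    have "is_path Q (pend Q (v, xs), [])"
      using is_path_drop[OF assms(1), of v xs "length xs"] True p by simp
    then have "(\<Sum>k\<in>{0..length xs}. x (v, take k xs) *
        (if is_path Q (pend Q (v, take k xs), drop k xs) \<and> drop k xs = [] then 1 else 0)) = x (v, xs)"
      by (subst sum_eq_single_term[where a = "length xs"]) auto
    then show ?thesis
      using True p by (simp add: path_alg_mul)
  qed (use path_alg_vanish[OF assms(2)] in \<open>simp add: path_alg_mul\<close>)
qed

lemma pth_mult:
  assumes Q: "tgt_in_verts Q" and p: "is_path Q (v, xs)" and q: "is_path Q (pend Q (v, xs), ys)"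
  shows "amul (path_alg Q) (pth (v, xs)) (pth (pend Q (v, xs), ys)) =
    (pth (v, xs @ ys) :: _ \<Rightarrow> 'k::field)"
proof
  fix r
  let ?term = "\<lambda>k. (pth (v, xs) (fst r, take k (snd r)) :: 'k) *
    pth (pend Q (v, xs), ys) (pend Q (fst r, take k (snd r)), drop k (snd r))"
  show "amul (path_alg Q) (pth (v, xs)) (pth (pend Q (v, xs), ys)) r = (pth (v, xs @ ys) r :: 'k)"
  proof (cases "r = (v, xs @ ys)")
    case True
    have "?term k = 0" if "k \<le> length (xs @ ys)" "k \<noteq> length xs" for k
    proof -
      have "take k (xs @ ys) \<noteq> xs"
        using that by (metis length_take min.absorb2)
      then show ?thesis using True by (simp add: pth_def)
    qed
    then have "(\<Sum>k\<in>{0..length (snd r)}. ?term k) = ?term (length xs)"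
      using True by (intro sum_eq_single_term) auto
    also have "\<dots> = 1"
      using True by (simp add: pth_def)
    finally show ?thesis
      using True is_path_append[OF Q p q] by (simp add: path_alg_mul pth_def)
  next
    case False
    have "?term k = 0" for k
      using False by (auto simp: pth_def)
    then have "(\<Sum>k\<in>{0..length (snd r)}. ?term k) = 0"
      by (intro sum.neutral) blast
    moreover have "pth (v, xs @ ys) r = (0::'k)"
      using False by (simp add: pth_def)
    ultimately show ?thesis
      by (simp add: path_alg_mul)
  qed
qed

lemma path_alg_mul_Nil:
  assumes "x \<in> acarr (path_alg Q)"
  shows "amul (path_alg Q) x y (v, []) = x (v, []) * y (v, [])"
  using assms by (auto simp: path_alg_mul)

lemma path_alg_mul_single:
  assumes "x \<in> acarr (path_alg Q)" "y \<in> acarr (path_alg Q)"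
  shows "amul (path_alg Q) x y (v, [a]) = x (v, []) * y (v, [a]) + x (v, [a]) * y (tgt Q a, [])"
  using assms by (auto simp: path_alg_mul atLeast0_atMost_Suc)

lemma path_alg_mul_pair:
  assumes Q: "tgt_in_verts Q" and x: "x \<in> acarr (path_alg Q)" and y: "y \<in> acarr (path_alg Q)"
  shows "amul (path_alg Q) x y (v, [a, b]) =
     x (v, []) * y (v, [a, b]) + x (v, [a]) * y (tgt Q a, [b]) + x (v, [a, b]) * y (tgt Q b, [])"
proof (cases "is_path Q (v, [a, b])")
  case True
  then show ?thesis by (simp add: path_alg_mul atLeast0_atMost_Suc numeral_2_eq_2 algebra_simps)
next
  case False
  then have "\<not> is_path Q (v, [a]) \<or> \<not> is_path Q (tgt Q a, [b])"
    by (auto simp: is_path_Cons[OF Q])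
  then show ?thesis using False x y by (auto simp: path_alg_mul)
qed

subsection \<open>Isomorphisms and quotients of algebras\<close>

definition ops_closed :: "('k, 'a) kalg \<Rightarrow> bool" where
  "ops_closed A \<longleftrightarrow> (\<forall>x\<in>acarr A. \<forall>y\<in>acarr A. aadd A x y \<in> acarr A)
     \<and> (\<forall>c. \<forall>x\<in>acarr A. asmul A c x \<in> acarr A)
     \<and> (\<forall>x\<in>acarr A. \<forall>y\<in>acarr A. amul A x y \<in> acarr A)
     \<and> aone A \<in> acarr A"

lemma alg_iso_comp:
  assumes "alg_iso A B f" "alg_iso B C g"
  shows "alg_iso A C (g \<circ> f)"
proof -
  have "\<forall>x\<in>acarr A. f x \<in> acarr B"
    using assms(1) unfolding alg_iso_def bij_betw_def by auto
  then show ?thesis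
    using assms unfolding alg_iso_def by (auto intro: bij_betw_trans)
qed

lemma alg_iso_inv:
  assumes iso: "alg_iso A B f" and closed: "ops_closed A"
  shows "alg_iso B A (inv_into (acarr A) f)"
proof -
  let ?g = "inv_into (acarr A) f"
  have bij: "bij_betw f (acarr A) (acarr B)"
    using iso by (simp add: alg_iso_def)
  have g: "x \<in> acarr B \<Longrightarrow> ?g x \<in> acarr A" "x \<in> acarr B \<Longrightarrow> f (?g x) = x" for x
    using bij by (auto simp: bij_betw_def inv_into_into f_inv_into_f)
  have gf: "x \<in> acarr A \<Longrightarrow> ?g (f x) = x" for x
    using bij by (simp add: bij_betw_def)
  have hom: "\<forall>x\<in>acarr A. \<forall>y\<in>acarr A. f (aadd A x y) = aadd B (f x) (f y)"
    "\<forall>c. \<forall>x\<in>acarr A. f (asmul A c x) = asmul B c (f x)"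
    "\<forall>x\<in>acarr A. \<forall>y\<in>acarr A. f (amul A x y) = amul B (f x) (f y)"
    "f (aone A) = aone B"
    using iso by (simp_all add: alg_iso_def)
  have cl: "\<forall>x\<in>acarr A. \<forall>y\<in>acarr A. aadd A x y \<in> acarr A"
    "\<forall>c. \<forall>x\<in>acarr A. asmul A c x \<in> acarr A"
    "\<forall>x\<in>acarr A. \<forall>y\<in>acarr A. amul A x y \<in> acarr A"
    "aone A \<in> acarr A"
    using closed by (simp_all add: ops_closed_def)
  show ?thesis
    unfolding alg_iso_def
  proof (intro conjI ballI allI)
    show "bij_betw ?g (acarr B) (acarr A)"
      using bij by (rule bij_betw_inv_into)
  next
    fix x y assume xy: "x \<in> acarr B" "y \<in> acarr B"
    have "aadd B x y = f (aadd A (?g x) (?g y))" "amul B x y = f (amul A (?g x) (?g y))"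
      using xy hom g by simp_all
    then show "?g (aadd B x y) = aadd A (?g x) (?g y)" "?g (amul B x y) = amul A (?g x) (?g y)"
      using xy cl g gf by simp_all
  next
    fix c x assume x: "x \<in> acarr B"
    have "asmul B c x = f (asmul A c (?g x))"
      using x hom g by simp
    then show "?g (asmul B c x) = asmul A c (?g x)"
      using x cl g gf by simp
  next
    show "?g (aone B) = aone A"
      using hom cl gf by metis
  qed
qed

lemma gen_ideal_is_ideal:
  assumes "is_ideal A (acarr A)" "S \<subseteq> acarr A"
  shows "is_ideal A (gen_ideal A S)"
proof -
  have "acarr A \<in> {J. is_ideal A J \<and> S \<subseteq> J}"
    using assms by simp
  then show ?thesis
    unfolding gen_ideal_def is_ideal_def[of A "\<Inter> _"] by (auto simp: is_ideal_def)
qed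

lemma gen_ideal_subset: "S \<subseteq> gen_ideal A S"
  by (auto simp: gen_ideal_def)

lemma gen_ideal_least: "is_ideal A J \<Longrightarrow> S \<subseteq> J \<Longrightarrow> gen_ideal A S \<subseteq> J"
  by (auto simp: gen_ideal_def)

locale kernel_quotient =
  fixes A :: "('k::field, 'a) kalg" and M :: "('k, 'm) kalg" and \<kappa> :: "'a \<Rightarrow> 'm" and J :: "'a set"
  assumes closed: "ops_closed A"
    and maps: "x \<in> acarr A \<Longrightarrow> \<kappa> x \<in> acarr M"
    and onto: "m \<in> acarr M \<Longrightarrow> \<exists>x\<in>acarr A. \<kappa> x = m"
    and hom_add: "x \<in> acarr A \<Longrightarrow> y \<in> acarr A \<Longrightarrow> \<kappa> (aadd A x y) = aadd M (\<kappa> x) (\<kappa> y)"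
    and hom_smul: "x \<in> acarr A \<Longrightarrow> \<kappa> (asmul A c x) = asmul M c (\<kappa> x)"
    and hom_mul: "x \<in> acarr A \<Longrightarrow> y \<in> acarr A \<Longrightarrow> \<kappa> (amul A x y) = amul M (\<kappa> x) (\<kappa> y)"
    and hom_one: "\<kappa> (aone A) = aone M"
    and kernel: "x \<in> acarr A \<Longrightarrow> y \<in> acarr A \<Longrightarrow> asub A y x \<in> J \<longleftrightarrow> \<kappa> y = \<kappa> x"
begin

lemma qcoset_eq: "x \<in> acarr A \<Longrightarrow> qcoset A J x = {y \<in> acarr A. \<kappa> y = \<kappa> x}"
  using kernel by (auto simp: qcoset_def)

lemma qrep_qcoset: "x \<in> acarr A \<Longrightarrow> qrep (qcoset A J x) \<in> acarr A \<and> \<kappa> (qrep (qcoset A J x)) = \<kappa> x"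
  using someI[of "\<lambda>y. y \<in> qcoset A J x" x] by (simp add: qcoset_eq qrep_def)

lemma qcoset_eq_iff: "x \<in> acarr A \<Longrightarrow> y \<in> acarr A \<Longrightarrow> qcoset A J x = qcoset A J y \<longleftrightarrow> \<kappa> x = \<kappa> y"
  by (auto simp: qcoset_eq)

lemma quot_ops:
  "acarr (quot_alg A J) = qcoset A J ` acarr A"
  "aadd (quot_alg A J) X Y = qcoset A J (aadd A (qrep X) (qrep Y))"
  "asmul (quot_alg A J) c X = qcoset A J (asmul A c (qrep X))"
  "amul (quot_alg A J) X Y = qcoset A J (amul A (qrep X) (qrep Y))"
  "aone (quot_alg A J) = qcoset A J (aone A)"
  by (simp_all add: quot_alg_def)

lemma quot_ops_closed: "ops_closed (quot_alg A J)"
  using closed qrep_qcoset unfolding ops_closed_def quot_ops by (auto simp del: qcoset_eq)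

lemma quot_iso: "alg_iso (quot_alg A J) M (\<lambda>X. \<kappa> (qrep X))"
  unfolding alg_iso_def
proof (intro conjI ballI allI)
  have "inj_on (\<lambda>X. \<kappa> (qrep X)) (qcoset A J ` acarr A)"
    using qrep_qcoset qcoset_eq_iff by (fastforce simp: inj_on_def)
  moreover have "(\<lambda>X. \<kappa> (qrep X)) ` qcoset A J ` acarr A = acarr M"
    using qrep_qcoset maps onto by (force simp: image_iff)
  ultimately show "bij_betw (\<lambda>X. \<kappa> (qrep X)) (acarr (quot_alg A J)) (acarr M)"
    by (simp add: bij_betw_def quot_ops)
next
  fix X Y assume "X \<in> acarr (quot_alg A J)" "Y \<in> acarr (quot_alg A J)"
  then obtain x y where "x \<in> acarr A" "y \<in> acarr A" "X = qcoset A J x" "Y = qcoset A J y"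
    by (auto simp: quot_ops)
  then show "\<kappa> (qrep (aadd (quot_alg A J) X Y)) = aadd M (\<kappa> (qrep X)) (\<kappa> (qrep Y))"
    and "\<kappa> (qrep (amul (quot_alg A J) X Y)) = amul M (\<kappa> (qrep X)) (\<kappa> (qrep Y))"
    using closed qrep_qcoset hom_add hom_mul by (simp_all add: quot_ops ops_closed_def)
next
  fix c X assume "X \<in> acarr (quot_alg A J)"
  then obtain x where "x \<in> acarr A" "X = qcoset A J x"
    by (auto simp: quot_ops)
  then show "\<kappa> (qrep (asmul (quot_alg A J) c X)) = asmul M c (\<kappa> (qrep X))"
    using closed qrep_qcoset hom_smul by (simp add: quot_ops ops_closed_def)
next
  show "\<kappa> (qrep (aone (quot_alg A J))) = aone M"
    using closed qrep_qcoset hom_one by (simp add: quot_ops ops_closed_def)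
qed

end

lemma alg_iso_ops_closed:
  assumes iso: "alg_iso A B \<phi>" and closed: "ops_closed A"
  shows "ops_closed B"
proof -
  have "bij_betw \<phi> (acarr A) (acarr B)"
    using iso by (simp add: alg_iso_def)
  then have onto: "y \<in> acarr B \<Longrightarrow> \<exists>x\<in>acarr A. y = \<phi> x" and into: "x \<in> acarr A \<Longrightarrow> \<phi> x \<in> acarr B" for x y
    by (auto simp: bij_betw_def)
  show ?thesis
    unfolding ops_closed_def
  proof (intro conjI ballI allI)
    fix x y assume "x \<in> acarr B" "y \<in> acarr B"
    then obtain x' y' where xy: "x' \<in> acarr A" "y' \<in> acarr A" "x = \<phi> x'" "y = \<phi> y'"
      using onto by metis
    then have "aadd B x y = \<phi> (aadd A x' y')" "amul B x y = \<phi> (amul A x' y')"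
      using iso by (simp_all add: alg_iso_def)
    then show "aadd B x y \<in> acarr B" "amul B x y \<in> acarr B"
      using closed into xy by (simp_all add: ops_closed_def)
  next
    fix c x assume "x \<in> acarr B"
    then obtain x' where x: "x' \<in> acarr A" "x = \<phi> x'"
      using onto by metis
    then have "asmul B c x = \<phi> (asmul A c x')"
      using iso by (simp add: alg_iso_def)
    then show "asmul B c x \<in> acarr B"
      using closed into x by (simp add: ops_closed_def)
  next
    have "aone B = \<phi> (aone A)"
      using iso by (simp add: alg_iso_def)
    then show "aone B \<in> acarr B"
      using closed into by (simp add: ops_closed_def)
  qed
qed

subsection \<open>Ideals and cosets in path algebras\<close>

lemma path_alg_zero_closed: "(\<lambda>p. 0) \<in> acarr (path_alg Q)"
  by simp

lemma path_alg_carrier_ideal: "is_ideal (path_alg Q) (acarr (path_alg Q))"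
  using path_alg_zero_closed path_alg_add_closed path_alg_smul_closed path_alg_mul_closed
  unfolding is_ideal_def path_alg_simps(2-4) by (auto simp del: path_alg_simps(1))

lemma path_alg_ops_closed: "finite (verts Q) \<Longrightarrow> ops_closed (path_alg Q)"
  using path_alg_add_closed path_alg_smul_closed path_alg_mul_closed path_alg_one_closed
  unfolding ops_closed_def path_alg_simps(2,4) by (auto simp del: path_alg_simps(1,5))

lemma asub_path_alg [simp]: "asub (path_alg Q) y x = (\<lambda>p. y p - x p)"
  by (simp add: asub_def)

context
  fixes Q :: "('v, 'e) quiver" and J :: "('v \<times> 'e list \<Rightarrow> 'k::field) set"
  assumes J: "is_ideal (path_alg Q) J"
begin

lemma path_ideal_subset: "J \<subseteq> acarr (path_alg Q)"
  and path_ideal_zero: "(\<lambda>p. 0) \<in> J"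
  and path_ideal_add: "x \<in> J \<Longrightarrow> y \<in> J \<Longrightarrow> (\<lambda>p. x p + y p) \<in> J"
  and path_ideal_smul: "x \<in> J \<Longrightarrow> (\<lambda>p. c * x p) \<in> J"
  and path_ideal_mul_left: "a \<in> acarr (path_alg Q) \<Longrightarrow> x \<in> J \<Longrightarrow> amul (path_alg Q) a x \<in> J"
  and path_ideal_mul_right: "a \<in> acarr (path_alg Q) \<Longrightarrow> x \<in> J \<Longrightarrow> amul (path_alg Q) x a \<in> J"
  using J unfolding is_ideal_def by (simp_all del: path_alg_simps(1))

lemma path_ideal_diff: "x \<in> J \<Longrightarrow> y \<in> J \<Longrightarrow> (\<lambda>p. x p - y p) \<in> J"
  using path_ideal_add[of x "\<lambda>p. (-1) * y p"] path_ideal_smul[of y "-1"] by simp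

lemma qcoset_eqI:
  assumes "x \<in> acarr (path_alg Q)" "y \<in> acarr (path_alg Q)" "(\<lambda>p. y p - x p) \<in> J"
  shows "qcoset (path_alg Q) J y = qcoset (path_alg Q) J x"
proof -
  have "(\<lambda>p. z p - y p) \<in> J \<longleftrightarrow> (\<lambda>p. z p - x p) \<in> J" for z
    using path_ideal_add[OF _ assms(3), of "\<lambda>p. z p - y p"]
      path_ideal_diff[OF _ assms(3), of "\<lambda>p. z p - x p"] by auto
  then show ?thesis
    by (simp add: qcoset_def)
qed

lemma qrep_in_qcoset:
  assumes "x \<in> acarr (path_alg Q)"
  shows "qrep (qcoset (path_alg Q) J x) \<in> acarr (path_alg Q)"
    and "(\<lambda>p. qrep (qcoset (path_alg Q) J x) p - x p) \<in> J"
proof -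
  have "x \<in> qcoset (path_alg Q) J x"
    using assms path_ideal_zero by (simp add: qcoset_def)
  then have "qrep (qcoset (path_alg Q) J x) \<in> qcoset (path_alg Q) J x"
    unfolding qrep_def by (rule someI[of "\<lambda>z. z \<in> qcoset (path_alg Q) J x"])
  then show "qrep (qcoset (path_alg Q) J x) \<in> acarr (path_alg Q)"
    and "(\<lambda>p. qrep (qcoset (path_alg Q) J x) p - x p) \<in> J"
    by (simp_all add: qcoset_def)
qed

lemma qcoset_zero_iff:
  assumes "x \<in> acarr (path_alg Q)"
  shows "qcoset (path_alg Q) J x = qcoset (path_alg Q) J (\<lambda>p. 0) \<longleftrightarrow> x \<in> J"
  using assms qcoset_eqI[of "\<lambda>p. 0" x] path_ideal_zero path_ideal_subset
  by (auto simp: qcoset_def set_eq_iff)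

lemma quot_add_qcoset:
  assumes x: "x \<in> acarr (path_alg Q)" and y: "y \<in> acarr (path_alg Q)"
  shows "aadd (quot_alg (path_alg Q) J) (qcoset (path_alg Q) J x) (qcoset (path_alg Q) J y)
    = qcoset (path_alg Q) J (\<lambda>p. x p + y p)"
  using path_ideal_add[OF qrep_in_qcoset(2)[OF x] qrep_in_qcoset(2)[OF y]]
    qcoset_eqI[OF path_alg_add_closed[OF x y]
      path_alg_add_closed[OF qrep_in_qcoset(1)[OF x] qrep_in_qcoset(1)[OF y]]]
  by (simp add: quot_alg_def algebra_simps)

lemma quot_smul_qcoset:
  assumes x: "x \<in> acarr (path_alg Q)"
  shows "asmul (quot_alg (path_alg Q) J) c (qcoset (path_alg Q) J x) = qcoset (path_alg Q) J (\<lambda>p. c * x p)"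
  using path_ideal_smul[OF qrep_in_qcoset(2)[OF x], of c]
    qcoset_eqI[OF path_alg_smul_closed[OF x] path_alg_smul_closed[OF qrep_in_qcoset(1)[OF x]]]
  by (simp add: quot_alg_def algebra_simps)

lemma quot_mul_qcoset:
  assumes x: "x \<in> acarr (path_alg Q)" and y: "y \<in> acarr (path_alg Q)"
  shows "amul (quot_alg (path_alg Q) J) (qcoset (path_alg Q) J x) (qcoset (path_alg Q) J y)
    = qcoset (path_alg Q) J (amul (path_alg Q) x y)"
proof -
  let ?M = "amul (path_alg Q)"
  let ?x' = "qrep (qcoset (path_alg Q) J x)" and ?y' = "qrep (qcoset (path_alg Q) J y)"
  have x': "?x' \<in> acarr (path_alg Q)" and y': "?y' \<in> acarr (path_alg Q)"
    using qrep_in_qcoset x y by blast+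
  have "?M ?x' ?y' = (\<lambda>p. ?M (\<lambda>q. ?x' q - x q) ?y' p + (?M x (\<lambda>q. ?y' q - y q) p + ?M x y p))"
    using path_alg_mul_add_left[of Q "\<lambda>q. ?x' q - x q" x ?y']
      path_alg_mul_add_right[of Q x "\<lambda>q. ?y' q - y q" y] by simp
  moreover have "(\<lambda>p. ?M (\<lambda>q. ?x' q - x q) ?y' p + ?M x (\<lambda>q. ?y' q - y q) p) \<in> J"
    using path_ideal_add path_ideal_mul_left[OF x qrep_in_qcoset(2)[OF y]]
      path_ideal_mul_right[OF y' qrep_in_qcoset(2)[OF x]] by blast
  ultimately have "(\<lambda>p. ?M ?x' ?y' p - ?M x y p) \<in> J"
    by (simp add: add.assoc)
  then show ?thesis
    using qcoset_eqI[OF path_alg_mul_closed[OF x y] path_alg_mul_closed[OF x' y']]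
    by (simp add: quot_alg_def)
qed

end

lemma path_alg_inverse_of_square_zero:
  assumes Q: "tgt_in_verts Q" "finite (verts Q)" and h: "h \<in> acarr (path_alg Q)"
    and hh: "amul (path_alg Q) h h = (\<lambda>p. 0)"
  defines "u \<equiv> \<lambda>p. aone (path_alg Q) p + (-1) * h p" and "w \<equiv> \<lambda>p. aone (path_alg Q) p + h p"
  shows "amul (path_alg Q) w u = aone (path_alg Q)" and "amul (path_alg Q) u w = aone (path_alg Q)"
proof -
  let ?M = "amul (path_alg Q)" and ?one = "aone (path_alg Q)"
  have one: "?one \<in> acarr (path_alg Q)"
    using path_alg_one_closed[OF Q(2)] .
  have hu: "?M h u = h" and hw: "?M h w = h"
    using hh path_alg_mul_one_right[OF Q(1) h]
    unfolding u_def w_def path_alg_mul_add_right path_alg_mul_smul_right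
    by (simp_all del: path_alg_simps(5))
  have "?M w u = (\<lambda>p. u p + h p)"
    using hu path_alg_mul_one_left[OF path_alg_add_closed[OF one path_alg_smul_closed[OF h, of "-1"]]]
    unfolding w_def path_alg_mul_add_left u_def by (simp del: path_alg_simps(5))
  then show "?M w u = ?one"
    by (simp add: u_def del: path_alg_simps(5))
  have "?M u w = (\<lambda>p. w p + (-1) * h p)"
    using hw path_alg_mul_one_left[OF path_alg_add_closed[OF one h]]
    unfolding u_def path_alg_mul_add_left path_alg_mul_smul_left w_def by (simp del: path_alg_simps(5))
  then show "?M u w = ?one"
    by (simp add: w_def del: path_alg_simps(5))
qed

lemma qcoset_in_jrad:
  assumes Q: "tgt_in_verts Q" "finite (verts Q)" and J: "is_ideal (path_alg Q) J"
    and x: "x \<in> acarr (path_alg Q)"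
    and square_zero: "\<And>y. y \<in> acarr (path_alg Q) \<Longrightarrow>
      amul (path_alg Q) (amul (path_alg Q) y x) (amul (path_alg Q) y x) = (\<lambda>p. 0)"
  shows "qcoset (path_alg Q) J x \<in> jrad (quot_alg (path_alg Q) J)"
proof -
  let ?A = "quot_alg (path_alg Q) J" and ?q = "qcoset (path_alg Q) J"
  let ?one = "aone (path_alg Q)"
  have one: "?one \<in> acarr (path_alg Q)"
    using path_alg_one_closed[OF Q(2)] .
  have "\<exists>z\<in>acarr ?A. amul ?A z (asub ?A (aone ?A) (amul ?A Y (?q x))) = aone ?A
      \<and> amul ?A (asub ?A (aone ?A) (amul ?A Y (?q x))) z = aone ?A" if "Y \<in> acarr ?A" for Y
  proof -
    obtain y where y: "y \<in> acarr (path_alg Q)" "Y = ?q y"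
      using \<open>Y \<in> acarr ?A\<close> by (auto simp: quot_alg_def)
    define h where "h = amul (path_alg Q) y x"
    have h: "h \<in> acarr (path_alg Q)"
      unfolding h_def using path_alg_mul_closed[OF y(1) x] .
    define u where "u = (\<lambda>p. ?one p + (-1) * h p)"
    define w where "w = (\<lambda>p. ?one p + h p)"
    have u: "u \<in> acarr (path_alg Q)" and w: "w \<in> acarr (path_alg Q)"
      unfolding u_def w_def using path_alg_add_closed[OF one] path_alg_smul_closed[OF h] h by blast+
    have one_q: "aone ?A = ?q ?one"
      by (simp add: quot_alg_def del: path_alg_simps(5))
    have sub: "asub ?A (aone ?A) (amul ?A Y (?q x)) = ?q u"
      unfolding asub_def y(2) quot_mul_qcoset[OF J y(1) x] h_def[symmetric]
        quot_smul_qcoset[OF J h] one_q quot_add_qcoset[OF J one path_alg_smul_closed[OF h]] u_def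
      by (rule refl)
    have "amul (path_alg Q) w u = ?one" "amul (path_alg Q) u w = ?one"
      using path_alg_inverse_of_square_zero[OF Q h square_zero[OF y(1), folded h_def]]
      unfolding u_def w_def .
    then have "amul ?A (?q w) (?q u) = aone ?A" "amul ?A (?q u) (?q w) = aone ?A"
      unfolding quot_mul_qcoset[OF J w u] quot_mul_qcoset[OF J u w] one_q by simp_all
    moreover
    moreover have "?q w \<in> acarr ?A"
      using w by (simp add: quot_alg_def)
    ultimately show ?thesis
      unfolding sub by blast
  qed
  moreover have "?q x \<in> acarr ?A"
    using x by (simp add: quot_alg_def)
  ultimately show ?thesis
    unfolding jrad_def by blast
qed

lemma path_ideal_sum:
  assumes "is_ideal (path_alg Q) J" "finite S" "\<And>s. s \<in> S \<Longrightarrow> f s \<in> J"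
  shows "(\<lambda>q. \<Sum>s\<in>S. f s q) \<in> J"
  using assms(2,3)
  by (induction S rule: finite_induct) (auto intro: path_ideal_zero[OF assms(1)] path_ideal_add[OF assms(1)])

lemma pth_append_in_ideal:
  assumes Q: "tgt_in_verts Q" and J: "is_ideal (path_alg Q) J"
    and p: "is_path Q (v, xs)" and q: "is_path Q (pend Q (v, xs), ys)"
    and in_J: "pth (v, xs) \<in> J \<or> pth (pend Q (v, xs), ys) \<in> J"
  shows "(pth (v, xs @ ys) :: _ \<Rightarrow> 'k::field) \<in> J"
proof -
  from in_J have "amul (path_alg Q) (pth (v, xs)) (pth (pend Q (v, xs), ys)) \<in> J"
  proof
    assume "pth (v, xs) \<in> J"
    then show ?thesis by (rule path_ideal_mul_right[OF J pth_in_path_alg[OF q]])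
  next
    assume "pth (pend Q (v, xs), ys) \<in> J"
    then show ?thesis by (rule path_ideal_mul_left[OF J pth_in_path_alg[OF p]])
  qed
  then show ?thesis
    unfolding pth_mult[OF Q p q] .
qed

lemma pth_append_congruent:
  assumes Q: "tgt_in_verts Q" and J: "is_ideal (path_alg Q) J"
    and paths: "is_path Q (v, xs)" "is_path Q (v, ys)" "pend Q (v, ys) = pend Q (v, xs)"
      "is_path Q (pend Q (v, xs), zs)"
    and congruent: "(\<lambda>p. pth (v, xs) p - pth (v, ys) p) \<in> J"
  shows "(pth (v, xs @ zs) :: _ \<Rightarrow> 'k::field) \<in> J \<longleftrightarrow> pth (v, ys @ zs) \<in> J"
proof -
  let ?x = "pth (v, xs @ zs) :: _ \<Rightarrow> 'k" and ?y = "pth (v, ys @ zs) :: _ \<Rightarrow> 'k"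
  have "amul (path_alg Q) (\<lambda>p. pth (v, xs) p - pth (v, ys) p) (pth (pend Q (v, xs), zs)) =
      (\<lambda>p. ?x p - ?y p)"
    using pth_mult[where 'k='k, OF Q paths(1,4)] pth_mult[where 'k='k, OF Q paths(2), of zs] paths(3,4)
    by (simp add: path_alg_mul_diff_left)
  then have diff: "(\<lambda>p. ?x p - ?y p) \<in> J"
    using path_ideal_mul_right[OF J pth_in_path_alg[OF paths(4)] congruent] by simp
  show ?thesis
  proof
    assume "?x \<in> J"
    then show "?y \<in> J"
      using path_ideal_diff[OF J \<open>?x \<in> J\<close> diff] by simp
  next
    assume "?y \<in> J"
    then show "?x \<in> J"
      using path_ideal_add[OF J diff \<open>?y \<in> J\<close>] by simp
  qed
qed

subsection \<open>Coordinates on a path algebra\<close>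

definition vcarr :: "'b set \<Rightarrow> ('b \<Rightarrow> 'k::zero) set" where
  "vcarr B = {c. \<forall>b. b \<notin> B \<longrightarrow> c b = 0}"

definition coord_alg ::
  "'b set \<Rightarrow> (('b \<Rightarrow> 'k) \<Rightarrow> ('b \<Rightarrow> 'k) \<Rightarrow> 'b \<Rightarrow> 'k) \<Rightarrow> ('b \<Rightarrow> 'k) \<Rightarrow> ('k::field, 'b \<Rightarrow> 'k) kalg"
where
  "coord_alg B mul one = \<lparr> acarr = vcarr B, aadd = (\<lambda>c d b. c b + d b), azero = (\<lambda>b. 0),
     asmul = (\<lambda>s c b. s * c b), amul = mul, aone = one \<rparr>"

lemma coord_alg_simps [simp]:
  "acarr (coord_alg B mul one) = vcarr B" "aadd (coord_alg B mul one) = (\<lambda>c d b. c b + d b)"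
  "azero (coord_alg B mul one) = (\<lambda>b. 0)" "asmul (coord_alg B mul one) = (\<lambda>s c b. s * c b)"
  "amul (coord_alg B mul one) = mul" "aone (coord_alg B mul one) = one"
  by (simp_all add: coord_alg_def)

lemma path_alg_expansion:
  assumes "x \<in> acarr (path_alg Q)"
  shows "x = (\<lambda>q. \<Sum>p\<in>{p. x p \<noteq> 0}. x p * pth p q)"
proof
  fix q
  have "(\<Sum>p\<in>{p. x p \<noteq> 0}. x p * pth p q) = (\<Sum>p\<in>{p. x p \<noteq> 0}. if q = p then x q else 0)"
    by (intro sum.cong) (auto simp: pth_def)
  then show "x q = (\<Sum>p\<in>{p. x p \<noteq> 0}. x p * pth p q)"
    using assms by (simp del: split_paired_All)
qed

text \<open>B indexes a basis of a quotient of the path algebra, represented by the paths bpath b;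
  coord reads off the coefficients, and mul is the multiplication they induce.\<close>

locale path_coordinates =
  fixes Q :: "('v, 'e) quiver" and B :: "'b set" and bpath :: "'b \<Rightarrow> 'v \<times> 'e list"
    and coord :: "('v \<times> 'e list \<Rightarrow> 'k::field) \<Rightarrow> 'b \<Rightarrow> 'k"
    and mul :: "('b \<Rightarrow> 'k) \<Rightarrow> ('b \<Rightarrow> 'k) \<Rightarrow> 'b \<Rightarrow> 'k" and one :: "'b \<Rightarrow> 'k"
  assumes tgt_in_verts: "tgt_in_verts Q" and finite_verts: "finite (verts Q)"
    and finite_basis: "finite B" and bpath_inj: "inj_on bpath B"
    and bpath_is_path: "b \<in> B \<Longrightarrow> is_path Q (bpath b)"
    and coord_add: "coord (\<lambda>p. x p + y p) = (\<lambda>b. coord x b + coord y b)"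
    and coord_smul: "coord (\<lambda>p. c * x p) = (\<lambda>b. c * coord x b)"
    and coord_outside: "b \<notin> B \<Longrightarrow> coord x b = 0"
    and coord_bpath: "b \<in> B \<Longrightarrow> coord (pth (bpath b)) = (\<lambda>b'. if b' = b then 1 else 0)"
    and coord_mul: "x \<in> acarr (path_alg Q) \<Longrightarrow> y \<in> acarr (path_alg Q) \<Longrightarrow>
      coord (amul (path_alg Q) x y) = mul (coord x) (coord y)"
    and coord_one: "coord (aone (path_alg Q)) = one"
begin

definition lift :: "('b \<Rightarrow> 'k) \<Rightarrow> 'v \<times> 'e list \<Rightarrow> 'k" where
  "lift m = (\<lambda>p. \<Sum>b\<in>B. m b * pth (bpath b) p)"

lemma coord_zero: "coord (\<lambda>p. 0) = (\<lambda>b. 0)"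
  using coord_smul[of 0 "\<lambda>p. 0"] by simp

lemma coord_diff: "coord (\<lambda>p. x p - y p) = (\<lambda>b. coord x b - coord y b)"
  using coord_add[of x "\<lambda>p. (-1) * y p"] coord_smul[of "-1" y] by simp

lemma coord_sum: "finite S \<Longrightarrow> coord (\<lambda>p. \<Sum>s\<in>S. f s p) = (\<lambda>b. \<Sum>s\<in>S. coord (f s) b)"
  by (induction S rule: finite_induct) (simp_all add: coord_zero coord_add)

lemma coord_in_vcarr: "coord x \<in> vcarr B"
  by (simp add: vcarr_def coord_outside)

lemma lift_in_path_alg: "lift m \<in> acarr (path_alg Q)"
proof -
  have "lift m p = 0" if "p \<notin> bpath ` B" for p
    using that by (auto simp: lift_def pth_def intro!: sum.neutral)
  then have "{p. lift m p \<noteq> 0} \<subseteq> bpath ` B"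
    by blast
  then show ?thesis
    using finite_basis bpath_is_path by (auto simp: lift_def pth_def intro: finite_subset)
qed

lemma coord_lift: "m \<in> vcarr B \<Longrightarrow> coord (lift m) = m"
  using finite_basis
  by (auto simp: lift_def coord_sum coord_smul coord_bpath coord_outside vcarr_def fun_eq_iff
      if_distrib[of "\<lambda>x. _ * x"] cong: if_cong)

lemma lift_coord_pth: "b \<in> B \<Longrightarrow> lift (coord (pth (bpath b))) = pth (bpath b)"
  using finite_basis by (simp add: lift_def coord_bpath if_distrib[of "\<lambda>x. x * _"] cong: if_cong)

lemma lift_zero: "lift (\<lambda>b. 0) = (\<lambda>p. 0)"
  by (simp add: lift_def)

lemma lift_coord_linear:
  "finite S \<Longrightarrow> lift (coord (\<lambda>q. \<Sum>p\<in>S. c p * f p q)) = (\<lambda>q. \<Sum>p\<in>S. c p * lift (coord (f p)) q)"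
  by (simp add: lift_def coord_sum coord_smul sum_distrib_left sum_distrib_right sum.swap[of _ B]
      mult.assoc)

lemma kernel_ideal: "is_ideal (path_alg Q) {x \<in> acarr (path_alg Q). coord x = (\<lambda>b. 0)}"
proof -
  have "amul (path_alg Q) f (\<lambda>p. 0) = (\<lambda>p. 0::'k)" "amul (path_alg Q) (\<lambda>p. 0) f = (\<lambda>p. 0::'k)" for f
    by (simp_all add: fun_eq_iff path_alg_mul)
  then have "mul c (\<lambda>b. 0) = (\<lambda>b. 0)" "mul (\<lambda>b. 0) c = (\<lambda>b. 0)" if "c \<in> vcarr B" for c
    using coord_mul[OF lift_in_path_alg path_alg_zero_closed, of c]
      coord_mul[OF path_alg_zero_closed lift_in_path_alg, of c]
    by (simp_all add: coord_lift[OF that] coord_zero)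
  then show ?thesis
    using path_alg_zero_closed path_alg_add_closed path_alg_smul_closed path_alg_mul_closed
    by (auto simp: is_ideal_def coord_zero coord_add coord_smul coord_mul coord_in_vcarr
        simp del: path_alg_simps(1))
qed

lemma reduce_to_basis:
  assumes J: "is_ideal (path_alg Q) J"
    and reduce: "\<And>p. is_path Q p \<Longrightarrow> (\<lambda>q. pth p q - lift (coord (pth p)) q) \<in> J"
    and x: "x \<in> acarr (path_alg Q)"
  shows "(\<lambda>q. x q - lift (coord x) q) \<in> J"
proof -
  let ?S = "{p. x p \<noteq> 0}"
  have S: "finite ?S" "p \<in> ?S \<Longrightarrow> is_path Q p" for p
    using x by (auto simp del: split_paired_All)
  have "lift (coord x) = lift (coord (\<lambda>q. \<Sum>p\<in>?S. x p * pth p q))"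
    using arg_cong[OF path_alg_expansion[OF x], of "\<lambda>f. lift (coord f)"] .
  also have "\<dots> = (\<lambda>q. \<Sum>p\<in>?S. x p * lift (coord (pth p)) q)"
    by (rule lift_coord_linear[OF S(1)])
  finally have lift_coord: "lift (coord x) = (\<lambda>q. \<Sum>p\<in>?S. x p * lift (coord (pth p)) q)" .
  have "(\<lambda>q. x q - lift (coord x) q) = (\<lambda>q. \<Sum>p\<in>?S. x p * (pth p q - lift (coord (pth p)) q))"
  proof
    fix q
    have "x q = (\<Sum>p\<in>?S. x p * pth p q)"
      using fun_cong[OF path_alg_expansion[OF x], of q] by simp
    then show "x q - lift (coord x) q = (\<Sum>p\<in>?S. x p * (pth p q - lift (coord (pth p)) q))"
      unfolding lift_coord by (simp add: sum_subtractf right_diff_distrib)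
  qed
  also have "\<dots> \<in> J"
    by (rule path_ideal_sum[OF J S(1)]) (rule path_ideal_smul[OF J reduce[OF S(2)]])
  finally show ?thesis .
qed

theorem quot_coord_iso:
  assumes J: "is_ideal (path_alg Q) J"
    and J_kernel: "\<And>x. x \<in> J \<Longrightarrow> coord x = (\<lambda>b. 0)"
    and reduce: "\<And>p. is_path Q p \<Longrightarrow> (\<lambda>q. pth p q - lift (coord (pth p)) q) \<in> J"
  shows "alg_iso (quot_alg (path_alg Q) J) (coord_alg B mul one) (\<lambda>X. coord (qrep X))"
    and "ops_closed (quot_alg (path_alg Q) J)"
proof -
  have kernel: "(\<lambda>p. y p - x p) \<in> J \<longleftrightarrow> coord y = coord x"
    if "x \<in> acarr (path_alg Q)" "y \<in> acarr (path_alg Q)" for x y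
    using J_kernel[of "\<lambda>p. y p - x p"] reduce_to_basis[OF J reduce path_alg_diff_closed[OF that(2,1)]]
    by (auto simp: coord_diff fun_eq_iff lift_zero)
  interpret kernel_quotient "path_alg Q" "coord_alg B mul one" coord J
  proof
    show "m \<in> acarr (coord_alg B mul one) \<Longrightarrow> \<exists>x\<in>acarr (path_alg Q). coord x = m" for m
      using lift_in_path_alg coord_lift by (auto simp del: path_alg_simps(1))
  qed (use path_alg_ops_closed[OF finite_verts] coord_in_vcarr coord_add coord_smul coord_mul
      coord_one kernel in \<open>simp_all del: path_alg_simps(1)\<close>)
  show "alg_iso (quot_alg (path_alg Q) J) (coord_alg B mul one) (\<lambda>X. coord (qrep X))"
    by (rule quot_iso)
  show "ops_closed (quot_alg (path_alg Q) J)"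
    by (rule quot_ops_closed)
qed

end

subsection \<open>Trivial extensions\<close>

lemma triv_ext_simps:
  "acarr (triv_ext A) = acarr A \<times> kdual A"
  "aadd (triv_ext A) (a, f) (b, g) = (aadd A a b, \<lambda>x. f x + g x)"
  "asmul (triv_ext A) c (a, f) = (asmul A c a, \<lambda>x. c * f x)"
  "amul (triv_ext A) (a, f) (b, g) =
     (amul A a b, \<lambda>x. if x \<in> acarr A then g (amul A x a) + f (amul A b x) else 0)"
  "aone (triv_ext A) = (aone A, \<lambda>x. 0)"
  by (simp_all add: triv_ext_def)

lemma kdualD:
  assumes "f \<in> kdual A"
  shows "x \<notin> acarr A \<Longrightarrow> f x = 0"
    and "x \<in> acarr A \<Longrightarrow> y \<in> acarr A \<Longrightarrow> f (aadd A x y) = f x + f y"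
    and "x \<in> acarr A \<Longrightarrow> f (asmul A c x) = c * f x"
  using assms by (auto simp: kdual_def)

lemma kdual_pullback:
  assumes g: "alg_iso B A g" and closed: "ops_closed B" and f: "f \<in> kdual A"
  shows "(\<lambda>x. if x \<in> acarr B then f (g x) else 0) \<in> kdual B"
proof -
  have "x \<in> acarr B \<Longrightarrow> g x \<in> acarr A" for x
    using g by (auto simp: alg_iso_def bij_betw_def)
  then show ?thesis
    using g closed kdualD[OF f] by (auto simp: kdual_def alg_iso_def ops_closed_def)
qed

definition triv_ext_map ::
  "('k::field, 'a) kalg \<Rightarrow> ('k, 'b) kalg \<Rightarrow> ('a \<Rightarrow> 'b) \<Rightarrow> 'a \<times> ('a \<Rightarrow> 'k) \<Rightarrow> 'b \<times> ('b \<Rightarrow> 'k)"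
where
  "triv_ext_map A B \<phi> = (\<lambda>(a, f). (\<phi> a, \<lambda>x. if x \<in> acarr B then f (inv_into (acarr A) \<phi> x) else 0))"

lemma triv_ext_iso:
  assumes iso: "alg_iso A B \<phi>" and closed: "ops_closed A"
  shows "alg_iso (triv_ext A) (triv_ext B) (triv_ext_map A B \<phi>)"
proof -
  define \<psi> where "\<psi> = inv_into (acarr A) \<phi>"
  have inv: "alg_iso B A \<psi>"
    unfolding \<psi>_def by (rule alg_iso_inv[OF iso closed])
  have bij: "bij_betw \<phi> (acarr A) (acarr B)"
    using iso by (simp add: alg_iso_def)
  have \<phi>: "x \<in> acarr A \<Longrightarrow> \<phi> x \<in> acarr B" "x \<in> acarr A \<Longrightarrow> \<psi> (\<phi> x) = x" for x
    using bij unfolding \<psi>_def by (auto simp: bij_betw_def)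
  have \<psi>: "x \<in> acarr B \<Longrightarrow> \<psi> x \<in> acarr A" "x \<in> acarr B \<Longrightarrow> \<phi> (\<psi> x) = x" for x
    using bij unfolding \<psi>_def by (auto simp: bij_betw_def inv_into_into f_inv_into_f)
  have cl: "x \<in> acarr A \<Longrightarrow> y \<in> acarr A \<Longrightarrow> amul A x y \<in> acarr A" for x y
    using closed by (simp add: ops_closed_def)
  have hom: "x \<in> acarr A \<Longrightarrow> y \<in> acarr A \<Longrightarrow> \<phi> (aadd A x y) = aadd B (\<phi> x) (\<phi> y)"
    "x \<in> acarr A \<Longrightarrow> \<phi> (asmul A c x) = asmul B c (\<phi> x)"
    "x \<in> acarr A \<Longrightarrow> y \<in> acarr A \<Longrightarrow> \<phi> (amul A x y) = amul B (\<phi> x) (\<phi> y)"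
    "\<phi> (aone A) = aone B" for x y c
    using iso by (simp_all add: alg_iso_def)
  have mul_\<psi>: "x \<in> acarr B \<Longrightarrow> a \<in> acarr A \<Longrightarrow>
      amul B x (\<phi> a) \<in> acarr B \<and> \<psi> (amul B x (\<phi> a)) = amul A (\<psi> x) a
    \<and> amul B (\<phi> a) x \<in> acarr B \<and> \<psi> (amul B (\<phi> a) x) = amul A a (\<psi> x)" for x a
    using hom(3)[OF \<psi>(1) , of x a] hom(3)[of a "\<psi> x"] \<phi> \<psi> cl by metis
  have map_eq: "triv_ext_map A B \<phi> = (\<lambda>(a, f). (\<phi> a, \<lambda>x. if x \<in> acarr B then f (\<psi> x) else 0))"
    unfolding triv_ext_map_def \<psi>_def ..
  then have map: "triv_ext_map A B \<phi> (a, f) = (\<phi> a, \<lambda>x. if x \<in> acarr B then f (\<psi> x) else 0)" for a f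
    by simp
  show ?thesis
    unfolding alg_iso_def
  proof (intro conjI ballI allI)
    show "bij_betw (triv_ext_map A B \<phi>) (acarr (triv_ext A)) (acarr (triv_ext B))"
      unfolding triv_ext_simps map_eq
      by (rule bij_betw_byWitness[where f' = "\<lambda>(b, g). (\<psi> b, \<lambda>x. if x \<in> acarr A then g (\<phi> x) else 0)"])
        (use \<phi> \<psi> kdual_pullback[OF inv alg_iso_ops_closed[OF iso closed]] kdual_pullback[OF iso closed]
          in \<open>auto simp: fun_eq_iff kdualD(1)\<close>)
  next
    fix x y assume "x \<in> acarr (triv_ext A)" "y \<in> acarr (triv_ext A)"
    then obtain a f b g where "x = (a, f)" "y = (b, g)" "a \<in> acarr A" "b \<in> acarr A"
      by (auto simp: triv_ext_simps)
    then show "triv_ext_map A B \<phi> (aadd (triv_ext A) x y) =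
        aadd (triv_ext B) (triv_ext_map A B \<phi> x) (triv_ext_map A B \<phi> y)"
      and "triv_ext_map A B \<phi> (amul (triv_ext A) x y) =
        amul (triv_ext B) (triv_ext_map A B \<phi> x) (triv_ext_map A B \<phi> y)"
      using hom \<psi> mul_\<psi> by (auto simp: triv_ext_simps map fun_eq_iff)
  next
    fix c x assume "x \<in> acarr (triv_ext A)"
    then obtain a f where "x = (a, f)" "a \<in> acarr A"
      by (auto simp: triv_ext_simps)
    then show "triv_ext_map A B \<phi> (asmul (triv_ext A) c x) = asmul (triv_ext B) c (triv_ext_map A B \<phi> x)"
      using hom by (auto simp: triv_ext_simps map fun_eq_iff)
  qed (use hom in \<open>simp add: triv_ext_simps map fun_eq_iff\<close>)
qed

definition coord_unit :: "'b set \<Rightarrow> 'b \<Rightarrow> 'b \<Rightarrow> 'k::field" where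
  "coord_unit B b = (\<lambda>b'. if b' = b \<and> b \<in> B then 1 else 0)"

definition coord_functional :: "'b set \<Rightarrow> ('b \<Rightarrow> 'k::field) \<Rightarrow> ('b \<Rightarrow> 'k) \<Rightarrow> 'k" where
  "coord_functional B w = (\<lambda>x. if x \<in> vcarr B then \<Sum>b\<in>B. x b * w b else 0)"

lemma vcarr_add: "x \<in> vcarr B \<Longrightarrow> y \<in> vcarr B \<Longrightarrow> (\<lambda>b. x b + y b :: 'k::field) \<in> vcarr B"
  and vcarr_smul: "x \<in> vcarr B \<Longrightarrow> (\<lambda>b. s * x b :: 'k::field) \<in> vcarr B"
  and coord_unit_vcarr: "(coord_unit B b :: _ \<Rightarrow> 'k::field) \<in> vcarr B"
  by (auto simp: vcarr_def coord_unit_def)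

lemma coord_unit_mult: "b \<in> B \<Longrightarrow> c b * coord_unit B b b' = (if b' = b then c b' else 0)"
  and mult_coord_unit: "b \<in> B \<Longrightarrow> coord_unit B b b' * c b' = (if b' = b then c b else 0)"
  by (simp_all add: coord_unit_def)

context
  fixes B :: "'b set" and mul one and f :: "('b \<Rightarrow> 'k::field) \<Rightarrow> 'k"
  assumes f: "f \<in> kdual (coord_alg B mul one)"
begin

lemma kdual_coord_add: "x \<in> vcarr B \<Longrightarrow> y \<in> vcarr B \<Longrightarrow> f (\<lambda>b. x b + y b) = f x + f y"
  and kdual_coord_smul: "x \<in> vcarr B \<Longrightarrow> f (\<lambda>b. s * x b) = s * f x"
  and kdual_coord_outside: "x \<notin> vcarr B \<Longrightarrow> f x = 0"
  using kdualD[OF f] by simp_all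

lemma kdual_coord_comb3:
  assumes "x \<in> vcarr B" "y \<in> vcarr B" "z \<in> vcarr B"
  shows "f (\<lambda>b. r * x b + s * y b + t * z b) = r * f x + s * f y + t * f z"
  using assms by (simp add: kdual_coord_add kdual_coord_smul vcarr_add vcarr_smul)

lemma kdual_coord_expansion:
  assumes B: "finite B" and c: "c \<in> vcarr B"
  shows "f c = (\<Sum>b\<in>B. c b * f (coord_unit B b))"
proof -
  have comb: "S \<subseteq> B \<Longrightarrow> f (\<lambda>b'. \<Sum>b\<in>S. c b * coord_unit B b b') = (\<Sum>b\<in>S. c b * f (coord_unit B b))" for S
  proof (induction S rule: infinite_finite_induct)
    case (infinite S)
    then show ?case
      using B finite_subset by blast
  next
    case empty
    then show ?case
      using kdual_coord_smul[of "\<lambda>b. 0" 0] by (simp add: vcarr_def)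
  next
    case (insert b S)
    have "(\<lambda>b'. \<Sum>b\<in>S. c b * coord_unit B b b') \<in> vcarr B"
      using insert.prems by (auto simp: vcarr_def coord_unit_def intro!: sum.neutral)
    then show ?case
      using insert kdual_coord_add[OF vcarr_smul[OF coord_unit_vcarr]] kdual_coord_smul[OF coord_unit_vcarr]
      by simp
  qed
  have "c = (\<lambda>b'. \<Sum>b\<in>B. c b * coord_unit B b b')"
    using c B by (auto simp: vcarr_def fun_eq_iff coord_unit_mult)
  then have "f c = f (\<lambda>b'. \<Sum>b\<in>B. c b * coord_unit B b b')"
    by (rule arg_cong)
  also have "\<dots> = (\<Sum>b\<in>B. c b * f (coord_unit B b))"
    by (rule comb[OF order_refl])
  finally show ?thesis .
qed

end

lemma coord_functional_kdual: "coord_functional B w \<in> kdual (coord_alg B mul one)"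
  by (auto simp: kdual_def coord_functional_def vcarr_def sum.distrib sum_distrib_left
      distrib_right mult.assoc)

lemma coord_functional_unit:
  "finite B \<Longrightarrow> b \<in> B \<Longrightarrow> coord_functional B w (coord_unit B b) = w b"
  by (simp add: coord_functional_def coord_unit_vcarr mult_coord_unit)

subsection \<open>The line quiver\<close>

lemma lineQ_simps [simp]:
  "verts (lineQ n ori) = {1..n}" "arrs (lineQ n ori) = {1..<n}"
  "src (lineQ n ori) j = (if ori j then j else Suc j)"
  "tgt (lineQ n ori) j = (if ori j then Suc j else j)"
  by (simp_all add: lineQ_def)

lemma lineQ_tgt_in_verts: "tgt_in_verts (lineQ n ori)"
  by (simp add: tgt_in_verts_def)

lemma is_path_lineQ_Cons:
  "is_path (lineQ n ori) (v, a # as) \<longleftrightarrow> v \<in> {1..n} \<and> a \<in> {1..<n} \<and>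
     (if ori a then a else Suc a) = v \<and> is_path (lineQ n ori) (if ori a then Suc a else a, as)"
  using is_path_Cons[OF lineQ_tgt_in_verts, of n ori v a as] by simp

lemma lineQ_path_monotone:
  "is_path (lineQ n ori) (v, a # as) \<Longrightarrow>
    (ori a \<and> sorted_wrt (<) (a # as)) \<or> (\<not> ori a \<and> sorted_wrt (>) (a # as))"
proof (induction as arbitrary: v a)
  case (Cons b bs)
  then have "is_path (lineQ n ori) (if ori a then Suc a else a, b # bs)"
    by (simp add: is_path_lineQ_Cons)
  moreover from this have "if ori a then ori b \<and> b = Suc a else \<not> ori b \<and> Suc b = a"
    by (auto simp: is_path_lineQ_Cons split: if_splits)
  ultimately show ?case
    using Cons.IH by (fastforce split: if_splits)
qed simp

lemma lineQ_path_distinct: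
  assumes "is_path (lineQ n ori) (v, xs)"
  shows "distinct xs"
proof (cases xs)
  case (Cons a as)
  then have "sorted_wrt (<) xs \<or> sorted_wrt (>) xs"
    using lineQ_path_monotone[of n ori v a as] assms by auto
  then show ?thesis
  proof
    assume "sorted_wrt (>) xs"
    then have "sorted_wrt (<) (rev xs)"
      by (simp only: sorted_wrt_rev)
    then show ?thesis
      by (simp add: strict_sorted_iff)
  qed (simp add: strict_sorted_iff)
qed simp

lemma lineQ_mul_arrow_support:
  assumes "amul (path_alg (lineQ n ori)) y (pth (s, [a])) q \<noteq> (0::'k::field)"
  shows "\<exists>ys. snd q = ys @ [a]"
proof -
  obtain k where "y (fst q, take k (snd q)) *
      (pth (s, [a]) :: _ \<Rightarrow> 'k) (pend (lineQ n ori) (fst q, take k (snd q)), drop k (snd q)) \<noteq> 0"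
    using assms unfolding path_alg_mul by (metis (no_types, lifting) sum.neutral)
  then have "drop k (snd q) = [a]"
    by (auto simp: pth_def split: if_splits)
  then show ?thesis
    by (metis append_take_drop_id)
qed

text \<open>A product of two paths ending in the arrow a would pass a twice.\<close>

lemma lineQ_mul_arrow_square_zero:
  fixes y :: "nat \<times> nat list \<Rightarrow> 'k::field" and n s a :: nat and ori :: "nat \<Rightarrow> bool"
  defines "h \<equiv> amul (path_alg (lineQ n ori)) y (pth (s, [a]))"
  shows "amul (path_alg (lineQ n ori)) h h = (\<lambda>p. 0)"
proof
  fix p :: "nat \<times> nat list"
  show "amul (path_alg (lineQ n ori)) h h p = 0"
  proof (cases "is_path (lineQ n ori) p")
    case True
    obtain v xs where p: "p = (v, xs)"
      by (cases p)
    have zero: "h (v, take k xs) * h (pend (lineQ n ori) (v, take k xs), drop k xs) = 0" for k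
    proof (rule ccontr)
      assume "\<not> ?thesis"
      then obtain ys zs where "take k xs = ys @ [a]" "drop k xs = zs @ [a]"
        using lineQ_mul_arrow_support unfolding h_def by (metis mult_not_zero snd_conv)
      then have "xs = ys @ a # zs @ [a]"
        by (metis append_take_drop_id append.assoc append_Cons append_Nil)
      then show False
        using lineQ_path_distinct True p by fastforce
    qed
    show ?thesis
      using True p unfolding path_alg_mul by (simp only: zero sum.neutral_const if_True fst_conv snd_conv)
  qed (simp add: path_alg_mul)
qed

lemma gentle_is_ideal:
  assumes "gentle Q (I :: ('v \<times> 'e list \<Rightarrow> 'k::field) set)"
  shows "is_ideal (path_alg Q) I"
proof -
  obtain R where R: "R \<subseteq> {p. is_path Q p \<and> length (snd p) = 2}" "I = gen_ideal (path_alg Q) (pth ` R)"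
    using assms unfolding gentle_def by blast
  then have "pth ` R \<subseteq> acarr (path_alg Q)"
    using pth_in_path_alg by blast
  then show ?thesis
    using gen_ideal_is_ideal[OF path_alg_carrier_ideal] R(2) by simp
qed

text \<open>Arrows lie in the radical, so rad^2 = 0 forces every path of length two, and hence
  every longer path, into I.\<close>

lemma lineQ_long_path_in_ideal:
  fixes I :: "(nat \<times> nat list \<Rightarrow> 'k::field) set"
  assumes gentle: "gentle (lineQ n ori) I" and rad: "rad_sq_zero (quot_alg (path_alg (lineQ n ori)) I)"
    and p: "is_path (lineQ n ori) (v, a # b # rest)"
  shows "pth (v, a # b # rest) \<in> I"
proof -
  let ?Q = "lineQ n ori"
  let ?q = "qcoset (path_alg ?Q) I"
  have I: "is_ideal (path_alg ?Q) I"
    using gentle by (rule gentle_is_ideal)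
  have paths: "is_path ?Q (v, [a])" "is_path ?Q (tgt ?Q a, [b])" "is_path ?Q (v, [a, b])"
    "is_path ?Q (tgt ?Q b, rest)"
    using p by (auto simp: is_path_Cons[OF lineQ_tgt_in_verts])
  have arrows: "(pth (v, [a]) :: _ \<Rightarrow> 'k) \<in> acarr (path_alg ?Q)"
    "(pth (tgt ?Q a, [b]) :: _ \<Rightarrow> 'k) \<in> acarr (path_alg ?Q)"
    using pth_in_path_alg paths by blast+
  have "?q (pth (v, [a])) \<in> jrad (quot_alg (path_alg ?Q) I)"
    "?q (pth (tgt ?Q a, [b])) \<in> jrad (quot_alg (path_alg ?Q) I)"
    using qcoset_in_jrad[OF lineQ_tgt_in_verts _ I arrows(1) lineQ_mul_arrow_square_zero]
      qcoset_in_jrad[OF lineQ_tgt_in_verts _ I arrows(2) lineQ_mul_arrow_square_zero] by simp_all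
  then have "amul (quot_alg (path_alg ?Q) I) (?q (pth (v, [a]))) (?q (pth (tgt ?Q a, [b])))
      = azero (quot_alg (path_alg ?Q) I)"
    using rad unfolding rad_sq_zero_def by blast
  then have "?q (amul (path_alg ?Q) (pth (v, [a])) (pth (tgt ?Q a, [b]))) = ?q (\<lambda>p. 0)"
    unfolding quot_mul_qcoset[OF I arrows] by (simp add: quot_alg_def)
  then have "?q (pth (v, [a, b])) = ?q (\<lambda>p. 0)"
    using pth_mult[where 'k='k, OF lineQ_tgt_in_verts paths(1), of "[b]"] paths(2) by simp
  then have "(pth (v, [a, b]) :: _ \<Rightarrow> 'k) \<in> I"
    using qcoset_zero_iff[OF I pth_in_path_alg[OF paths(3)]] by simp
  then have "amul (path_alg ?Q) (pth (v, [a, b])) (pth (tgt ?Q b, rest)) \<in> I"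
    by (rule path_ideal_mul_right[OF I pth_in_path_alg[OF paths(4)]])
  moreover have "amul (path_alg ?Q) (pth (v, [a, b])) (pth (tgt ?Q b, rest)) = (pth (v, a # b # rest) :: _ \<Rightarrow> 'k)"
    using pth_mult[where 'k='k, OF lineQ_tgt_in_verts paths(3), of rest] paths(4) by simp
  ultimately show ?thesis
    by simp
qed

subsection \<open>Coordinates for A\<close>

text \<open>Once all paths of length two vanish, A has the vertices and arrows as a basis.\<close>

datatype line_idx = Vert nat | Arr nat

definition line_basis :: "nat \<Rightarrow> line_idx set" where
  "line_basis n = Vert ` {1..n} \<union> Arr ` {1..<n}"

definition line_bpath :: "nat \<Rightarrow> (nat \<Rightarrow> bool) \<Rightarrow> line_idx \<Rightarrow> nat \<times> nat list" where
  "line_bpath n ori b = (case b of Vert i \<Rightarrow> (i, []) | Arr j \<Rightarrow> (src (lineQ n ori) j, [j]))"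

definition line_coord :: "nat \<Rightarrow> (nat \<Rightarrow> bool) \<Rightarrow> (nat \<times> nat list \<Rightarrow> 'k::field) \<Rightarrow> line_idx \<Rightarrow> 'k" where
  "line_coord n ori x = (\<lambda>b. if b \<in> line_basis n then x (line_bpath n ori b) else 0)"

definition line_mul ::
  "nat \<Rightarrow> (nat \<Rightarrow> bool) \<Rightarrow> (line_idx \<Rightarrow> 'k::field) \<Rightarrow> (line_idx \<Rightarrow> 'k) \<Rightarrow> line_idx \<Rightarrow> 'k"
where
  "line_mul n ori c d = (\<lambda>b. if b \<in> line_basis n then (case b of
       Vert i \<Rightarrow> c (Vert i) * d (Vert i)
     | Arr j \<Rightarrow> c (Vert (src (lineQ n ori) j)) * d (Arr j) + c (Arr j) * d (Vert (tgt (lineQ n ori) j)))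
     else 0)"

definition line_one :: "nat \<Rightarrow> line_idx \<Rightarrow> 'k::field" where
  "line_one n = (\<lambda>b. if b \<in> Vert ` {1..n} then 1 else 0)"

abbreviation line_alg :: "nat \<Rightarrow> (nat \<Rightarrow> bool) \<Rightarrow> ('k::field, line_idx \<Rightarrow> 'k) kalg" where
  "line_alg n ori \<equiv> coord_alg (line_basis n) (line_mul n ori) (line_one n)"

lemma line_basis_iff [simp]:
  "Vert i \<in> line_basis n \<longleftrightarrow> i \<in> {1..n}" "Arr j \<in> line_basis n \<longleftrightarrow> j \<in> {1..<n}"
  by (auto simp: line_basis_def)

lemma line_coord_mul:
  assumes x: "x \<in> acarr (path_alg (lineQ n ori))" and y: "y \<in> acarr (path_alg (lineQ n ori))"
  shows "line_coord n ori (amul (path_alg (lineQ n ori)) x y) =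
    line_mul n ori (line_coord n ori x) (line_coord n ori y)"
proof
  fix b
  show "line_coord n ori (amul (path_alg (lineQ n ori)) x y) b =
      line_mul n ori (line_coord n ori x) (line_coord n ori y) b"
    using path_alg_mul_Nil[OF x] path_alg_mul_single[OF x y]
    by (cases b) (auto simp: line_coord_def line_mul_def line_bpath_def)
qed

lemma line_coordinates:
  "path_coordinates (lineQ n ori) (line_basis n) (line_bpath n ori)
     (line_coord n ori :: (_ \<Rightarrow> 'k::field) \<Rightarrow> _) (line_mul n ori) (line_one n)"
proof
  show "inj_on (line_bpath n ori) (line_basis n)"
    by (auto simp: inj_on_def line_basis_def line_bpath_def)
  show "is_path (lineQ n ori) (line_bpath n ori b)" if "b \<in> line_basis n" for b
    using that by (auto simp: line_basis_def line_bpath_def is_path_lineQ_Cons)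
  show "line_coord n ori (pth (line_bpath n ori b)) = (\<lambda>b'. if b' = b then 1 else 0)"
    if "b \<in> line_basis n" for b
    using that by (auto simp: line_coord_def pth_def line_basis_def line_bpath_def fun_eq_iff)
  show "line_coord n ori (aone (path_alg (lineQ n ori))) = (line_one n :: _ \<Rightarrow> 'k)"
    by (auto simp: line_coord_def line_one_def line_basis_def line_bpath_def fun_eq_iff)
  show "line_coord n ori (amul (path_alg (lineQ n ori)) x y) =
      line_mul n ori (line_coord n ori x) (line_coord n ori y)"
    if "x \<in> acarr (path_alg (lineQ n ori))" "y \<in> acarr (path_alg (lineQ n ori))" for x y :: "_ \<Rightarrow> 'k"
    using line_coord_mul[OF that] .
qed (auto simp: lineQ_tgt_in_verts line_basis_def line_coord_def)

theorem quot_line_iso: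
  fixes I :: "(nat \<times> nat list \<Rightarrow> 'k::field) set"
  assumes gentle: "gentle (lineQ n ori) I" and rad: "rad_sq_zero (quot_alg (path_alg (lineQ n ori)) I)"
  shows "alg_iso (quot_alg (path_alg (lineQ n ori)) I) (line_alg n ori) (\<lambda>X. line_coord n ori (qrep X))"
    and "ops_closed (quot_alg (path_alg (lineQ n ori)) I)"
proof -
  interpret path_coordinates "lineQ n ori" "line_basis n" "line_bpath n ori"
    "line_coord n ori :: (_ \<Rightarrow> 'k) \<Rightarrow> _" "line_mul n ori" "line_one n"
    by (rule line_coordinates)
  have I: "is_ideal (path_alg (lineQ n ori)) I"
    using gentle by (rule gentle_is_ideal)
  have short: "length (snd (line_bpath n ori b)) < 2" for b
    by (simp add: line_bpath_def split: line_idx.split)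
  have "\<forall>f\<in>I. \<forall>p. length (snd p) < 2 \<longrightarrow> f p = 0"
    using gentle unfolding gentle_def by blast
  then have kernel: "line_coord n ori x = (\<lambda>b. 0)" if "x \<in> I" for x
    using that short by (auto simp: line_coord_def fun_eq_iff simp del: split_paired_All)
  have reduce: "(\<lambda>q. pth p q - lift (line_coord n ori (pth p)) q) \<in> I"
    if p: "is_path (lineQ n ori) p" for p
  proof (cases "p \<in> line_bpath n ori ` line_basis n")
    case True
    then show ?thesis
      using lift_coord_pth path_ideal_zero[OF I] by auto
  next
    case False
    obtain v xs where pv: "p = (v, xs)"
      by (cases p)
    have "xs \<noteq> []"
    proof
      assume "xs = []"
      then have "p = line_bpath n ori (Vert v)" "Vert v \<in> line_basis n"
        using p pv by (auto simp: line_bpath_def is_path_def)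
      then show False
        using False by blast
    qed
    moreover have "xs \<noteq> [a]" for a
    proof
      assume "xs = [a]"
      then have "p = line_bpath n ori (Arr a)" "Arr a \<in> line_basis n"
        using p pv by (auto simp: line_bpath_def is_path_lineQ_Cons)
      then show False
        using False by blast
    qed
    ultimately obtain a b rest where "p = (v, a # b # rest)"
      using pv by (metis list.exhaust)
    moreover from this have "line_bpath n ori c \<noteq> p" for c
      using short[of c] by auto
    then have "line_coord n ori (pth p :: _ \<Rightarrow> 'k) = (\<lambda>b. 0)"
      by (simp add: line_coord_def pth_def fun_eq_iff)
    ultimately show ?thesis
      using lineQ_long_path_in_ideal[OF gentle rad] p by (simp add: lift_zero)
  qed
  show "alg_iso (quot_alg (path_alg (lineQ n ori)) I) (line_alg n ori) (\<lambda>X. line_coord n ori (qrep X))"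
    and "ops_closed (quot_alg (path_alg (lineQ n ori)) I)"
    using quot_coord_iso[OF I kernel reduce] by auto
qed

subsection \<open>Coordinates for the Brauer line algebra\<close>

lemma brauerQ_simps [simp]:
  "verts (brauerQ n) = {1..n}"
  "arrs (brauerQ n) = (if n = 1 then {BL} else BA ` {1..<n} \<union> BB ` {1..<n})"
  "src (brauerQ n) (BA i) = i" "src (brauerQ n) (BB i) = Suc i" "src (brauerQ n) BL = 1"
  "tgt (brauerQ n) (BA i) = Suc i" "tgt (brauerQ n) (BB i) = i" "tgt (brauerQ n) BL = 1"
  by (simp_all add: brauerQ_def)

lemma brauerQ_tgt_in_verts: "tgt_in_verts (brauerQ n)"
  by (auto simp: tgt_in_verts_def brauerQ_def split: barr.splits)

lemma is_path_brauerQ_Cons: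
  "is_path (brauerQ n) (v, a # as) \<longleftrightarrow> v \<in> {1..n} \<and> a \<in> arrs (brauerQ n) \<and>
     src (brauerQ n) a = v \<and> is_path (brauerQ n) (tgt (brauerQ n) a, as)"
  using is_path_Cons[OF brauerQ_tgt_in_verts] by simp

text \<open>Basis: the idempotents, the arrows alpha_i and beta_i, and one socle element per
  vertex, represented by a 2-cycle (by the loop when n = 1).\<close>

datatype brauer_idx = Idem nat | Alpha nat | Beta nat | Soc nat

definition brauer_basis :: "nat \<Rightarrow> brauer_idx set" where
  "brauer_basis n = Idem ` {1..n} \<union> Alpha ` {1..<n} \<union> Beta ` {1..<n} \<union> Soc ` {1..n}"

definition brauer_bpath :: "nat \<Rightarrow> brauer_idx \<Rightarrow> nat \<times> barr list" where
  "brauer_bpath n b = (case b of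
       Idem i \<Rightarrow> (i, []) | Alpha i \<Rightarrow> (i, [BA i]) | Beta i \<Rightarrow> (Suc i, [BB i])
     | Soc i \<Rightarrow> if n = 1 then (1, [BL]) else if i < n then (i, [BA i, BB i])
                else (i, [BB (i - 1), BA (i - 1)]))"

text \<open>The socle coordinate at i adds up the two 2-cycles at i, which the commutativity
  relation identifies; at an end vertex one of them is not a path and contributes 0.\<close>

definition brauer_coord :: "nat \<Rightarrow> (nat \<times> barr list \<Rightarrow> 'k::field) \<Rightarrow> brauer_idx \<Rightarrow> 'k" where
  "brauer_coord n x = (\<lambda>b. if b \<in> brauer_basis n then (case b of
       Idem i \<Rightarrow> x (i, []) | Alpha i \<Rightarrow> x (i, [BA i]) | Beta i \<Rightarrow> x (Suc i, [BB i])
     | Soc i \<Rightarrow> if n = 1 then x (i, [BL]) else x (i, [BA i, BB i]) + x (i, [BB (i - 1), BA (i - 1)]))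
     else 0)"

definition brauer_mul :: "nat \<Rightarrow> (brauer_idx \<Rightarrow> 'k::field) \<Rightarrow> (brauer_idx \<Rightarrow> 'k) \<Rightarrow> brauer_idx \<Rightarrow> 'k" where
  "brauer_mul n c d = (\<lambda>b. if b \<in> brauer_basis n then (case b of
       Idem i \<Rightarrow> c (Idem i) * d (Idem i)
     | Alpha i \<Rightarrow> c (Idem i) * d (Alpha i) + c (Alpha i) * d (Idem (Suc i))
     | Beta i \<Rightarrow> c (Idem (Suc i)) * d (Beta i) + c (Beta i) * d (Idem i)
     | Soc i \<Rightarrow> c (Idem i) * d (Soc i) + c (Soc i) * d (Idem i) + c (Alpha i) * d (Beta i)
                + c (Beta (i - 1)) * d (Alpha (i - 1)))
     else 0)"

definition brauer_one :: "nat \<Rightarrow> brauer_idx \<Rightarrow> 'k::field" where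
  "brauer_one n = (\<lambda>b. if b \<in> Idem ` {1..n} then 1 else 0)"

abbreviation brauer_alg :: "nat \<Rightarrow> ('k::field, brauer_idx \<Rightarrow> 'k) kalg" where
  "brauer_alg n \<equiv> coord_alg (brauer_basis n) (brauer_mul n) (brauer_one n)"

lemma brauer_basis_iff [simp]:
  "Idem i \<in> brauer_basis n \<longleftrightarrow> i \<in> {1..n}" "Alpha i \<in> brauer_basis n \<longleftrightarrow> i \<in> {1..<n}"
  "Beta i \<in> brauer_basis n \<longleftrightarrow> i \<in> {1..<n}" "Soc i \<in> brauer_basis n \<longleftrightarrow> i \<in> {1..n}"
  by (auto simp: brauer_basis_def)

lemma brauer_coord_outside: "b \<notin> brauer_basis n \<Longrightarrow> brauer_coord n x b = 0"
  by (simp add: brauer_coord_def)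

context
  fixes n :: nat and x :: "nat \<times> barr list \<Rightarrow> 'k::field"
  assumes x: "x \<in> acarr (path_alg (brauerQ n))"
begin

lemma brauer_coord_Idem: "brauer_coord n x (Idem i) = x (i, [])"
  using path_alg_vanish[OF x, of "(i, [])"] by (auto simp: brauer_coord_def)

lemma brauer_coord_Alpha: "n \<noteq> 1 \<Longrightarrow> brauer_coord n x (Alpha i) = x (i, [BA i])"
  using path_alg_vanish[OF x, of "(i, [BA i])"] by (auto simp: brauer_coord_def is_path_brauerQ_Cons)

lemma brauer_coord_Beta: "n \<noteq> 1 \<Longrightarrow> brauer_coord n x (Beta i) = x (Suc i, [BB i])"
  using path_alg_vanish[OF x, of "(Suc i, [BB i])"] by (auto simp: brauer_coord_def is_path_brauerQ_Cons)

lemma brauer_coord_Soc: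
  "n \<noteq> 1 \<Longrightarrow> brauer_coord n x (Soc i) = x (i, [BA i, BB i]) + x (i, [BB (i - 1), BA (i - 1)])"
  using path_alg_vanish[OF x, of "(i, [BA i, BB i])"] path_alg_vanish[OF x, of "(i, [BB (i - 1), BA (i - 1)])"]
  by (auto simp: brauer_coord_def is_path_brauerQ_Cons)

lemma brauer_coord_loop: "n = 1 \<Longrightarrow> brauer_coord n x (Soc i) = x (i, [BL])"
  using path_alg_vanish[OF x, of "(i, [BL])"] by (auto simp: brauer_coord_def is_path_brauerQ_Cons)

end

lemma brauer_coord_mul:
  assumes x: "x \<in> acarr (path_alg (brauerQ n))" and y: "y \<in> acarr (path_alg (brauerQ n))"
  shows "brauer_coord n (amul (path_alg (brauerQ n)) x y) =
    brauer_mul n (brauer_coord n x) (brauer_coord n y)"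
proof
  fix b
  have xy: "amul (path_alg (brauerQ n)) x y \<in> acarr (path_alg (brauerQ n))"
    using path_alg_mul_closed[OF x y] .
  note coords = brauer_coord_Idem brauer_coord_Alpha brauer_coord_Beta brauer_coord_Soc brauer_coord_loop
  note products = path_alg_mul_Nil[OF x] path_alg_mul_single[OF x y]
    path_alg_mul_pair[OF brauerQ_tgt_in_verts x y]
  show "brauer_coord n (amul (path_alg (brauerQ n)) x y) b =
      brauer_mul n (brauer_coord n x) (brauer_coord n y) b"
  proof (cases "b \<in> brauer_basis n")
    case True
    then show ?thesis
    proof (cases b)
      case (Soc i)
      then have "Suc (i - 1) = i" "n = 1 \<Longrightarrow> i = 1"
        using True by auto
      then show ?thesis
        using True Soc coords[OF x] coords[OF y] coords[OF xy] products
        by (cases "n = 1") (simp_all add: brauer_mul_def brauer_coord_outside algebra_simps)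
    qed (use True coords[OF x] coords[OF y] coords[OF xy] products in
      \<open>auto simp: brauer_mul_def brauer_coord_def\<close>)
  qed (simp add: brauer_coord_def brauer_mul_def)
qed

lemma brauer_coordinates:
  "path_coordinates (brauerQ n) (brauer_basis n) (brauer_bpath n)
     (brauer_coord n :: (_ \<Rightarrow> 'k::field) \<Rightarrow> _) (brauer_mul n) (brauer_one n)"
proof
  show "inj_on (brauer_bpath n) (brauer_basis n)"
  proof
    fix b c assume "b \<in> brauer_basis n" "c \<in> brauer_basis n" "brauer_bpath n b = brauer_bpath n c"
    then show "b = c"
      by (cases b; cases c) (auto simp: brauer_bpath_def split: if_splits)
  qed
  show "is_path (brauerQ n) (brauer_bpath n b)" if "b \<in> brauer_basis n" for b
    using that by (cases b) (auto simp: brauer_bpath_def is_path_brauerQ_Cons)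
  show "brauer_coord n (pth (brauer_bpath n b)) = (\<lambda>c. if c = b then 1 else 0)"
    if b: "b \<in> brauer_basis n" for b
  proof
    fix c
    show "brauer_coord n (pth (brauer_bpath n b)) c = (if c = b then 1 else 0)"
    proof (cases b)
      case (Soc i)
      then consider "n = 1" "brauer_bpath n b = (1, [BL])" "i = 1"
        | "n \<noteq> 1" "i < n" "brauer_bpath n b = (i, [BA i, BB i])"
        | "n \<noteq> 1" "i = n" "brauer_bpath n b = (i, [BB (i - 1), BA (i - 1)])"
        using b by (cases "n = 1"; cases "i < n") (auto simp: brauer_bpath_def)
      then show ?thesis
        using b Soc by cases (cases c; auto simp: brauer_coord_def pth_def)+
    qed (use b in \<open>cases c; auto simp: brauer_coord_def brauer_bpath_def pth_def\<close>)+
  qed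
  show "brauer_coord n (aone (path_alg (brauerQ n))) = (brauer_one n :: _ \<Rightarrow> 'k)"
  proof
    fix b
    show "brauer_coord n (aone (path_alg (brauerQ n))) b = (brauer_one n b :: 'k)"
      by (cases b) (auto simp: brauer_coord_def brauer_one_def)
  qed
  show "brauer_coord n (amul (path_alg (brauerQ n)) x y) =
      brauer_mul n (brauer_coord n x) (brauer_coord n y)"
    if "x \<in> acarr (path_alg (brauerQ n))" "y \<in> acarr (path_alg (brauerQ n))" for x y :: "_ \<Rightarrow> 'k"
    using brauer_coord_mul[OF that] .
qed (auto simp: brauerQ_tgt_in_verts brauer_basis_def brauer_coord_def fun_eq_iff algebra_simps)

definition brauer_ideal :: "nat \<Rightarrow> (nat \<times> barr list \<Rightarrow> 'k::field) set" where
  "brauer_ideal n = gen_ideal (path_alg (brauerQ n)) (brauer_rels n)"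

lemma brauer_rels_in_kernel:
  fixes r :: "nat \<times> barr list \<Rightarrow> 'k::field"
  assumes n: "1 \<le> n" and r: "r \<in> brauer_rels n"
  shows "r \<in> acarr (path_alg (brauerQ n)) \<and> brauer_coord n r = (\<lambda>b. 0)"
proof (cases "n = 1")
  case True
  then have "r = pth (1, [BL, BL])"
    using r by (simp add: brauer_rels_def)
  moreover have "brauer_coord n (pth (1, [BL, BL])) b = (0::'k)" for b
    by (cases b) (simp_all add: brauer_coord_def pth_def)
  ultimately show ?thesis
    using True pth_in_path_alg[of "brauerQ n" "(1, [BL, BL])"] by (auto simp: is_path_brauerQ_Cons)
next
  case False
  let ?comm = "\<lambda>i. (\<lambda>p. pth (Suc i, [BB i, BA i]) p - pth (Suc i, [BA (Suc i), BB (Suc i)]) p)"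
  have zero: "pth p \<in> acarr (path_alg (brauerQ n)) \<and> brauer_coord n (pth p) = (\<lambda>b. 0::'k)"
    if "is_path (brauerQ n) p"
    "p \<in> {(i, [BA i, BA (Suc i)]) | i. True} \<union> {(i + 2, [BB (Suc i), BB i]) | i. True}
      \<union> {(1, [BA 1, BB 1, BA 1]), (n, [BB (n - 1), BA (n - 1), BB (n - 1)])}" for p
  proof
    show "brauer_coord n (pth p) = (\<lambda>b. 0::'k)"
    proof
      fix b
      show "brauer_coord n (pth p) b = 0"
        using that False by (cases b) (auto simp: brauer_coord_def pth_def)
    qed
  qed (rule pth_in_path_alg[OF that(1)])
  have comm_coord: "brauer_coord n (?comm i) b = (0::'k)" if "i \<in> {1..n - 2}" for i b
    using that False by (cases b) (auto simp: brauer_coord_def pth_def)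
  from r False consider
      (alpha) i where "i \<in> {1..n - 2}" "r = pth (i, [BA i, BA (Suc i)])"
    | (beta) i where "i \<in> {1..n - 2}" "r = pth (i + 2, [BB (Suc i), BB i])"
    | (comm) i where "i \<in> {1..n - 2}" "r = ?comm i"
    | (left) "r = pth (1, [BA 1, BB 1, BA 1])"
    | (right) "r = pth (n, [BB (n - 1), BA (n - 1), BB (n - 1)])"
    unfolding brauer_rels_def by auto
  then show ?thesis
  proof cases
    case (comm i)
    then have "?comm i \<in> acarr (path_alg (brauerQ n))"
      using False by (intro path_alg_diff_closed pth_in_path_alg) (auto simp: is_path_brauerQ_Cons)
    then show ?thesis
      using comm(1) comm_coord unfolding comm(2) by (simp add: fun_eq_iff)
  next
    case (alpha i)
    show ?thesis
      unfolding alpha(2) by (rule zero) (use alpha(1) False in \<open>auto simp: is_path_brauerQ_Cons\<close>)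
  next
    case (beta i)
    show ?thesis
      unfolding beta(2) by (rule zero) (use beta(1) False in \<open>auto simp: is_path_brauerQ_Cons\<close>)
  next
    case left
    show ?thesis
      unfolding left by (rule zero) (use False n in \<open>auto simp: is_path_brauerQ_Cons\<close>)
  next
    case right
    show ?thesis
      unfolding right by (rule zero) (use False n in \<open>auto simp: is_path_brauerQ_Cons\<close>)
  qed
qed

context
  fixes n :: nat
  assumes n: "1 \<le> n"
begin

lemma brauer_ideal_is_ideal: "is_ideal (path_alg (brauerQ n)) (brauer_ideal n :: (_ \<Rightarrow> 'k::field) set)"
  unfolding brauer_ideal_def
proof (rule gen_ideal_is_ideal[OF path_alg_carrier_ideal], rule subsetI)
  fix r :: "_ \<Rightarrow> 'k" assume "r \<in> brauer_rels n"
  then show "r \<in> acarr (path_alg (brauerQ n))"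
    by (rule conjunct1[OF brauer_rels_in_kernel[OF n]])
qed

lemma brauer_rel_in_ideal: "r \<in> brauer_rels n \<Longrightarrow> r \<in> brauer_ideal n"
  unfolding brauer_ideal_def by (rule subsetD[OF gen_ideal_subset])

lemma brauer_ideal_kernel:
  assumes "x \<in> brauer_ideal n"
  shows "brauer_coord n x = (\<lambda>b. 0 :: 'k::field)"
proof -
  interpret path_coordinates "brauerQ n" "brauer_basis n" "brauer_bpath n"
    "brauer_coord n :: (_ \<Rightarrow> 'k) \<Rightarrow> _" "brauer_mul n" "brauer_one n"
    by (rule brauer_coordinates)
  have "brauer_ideal n \<subseteq> {x \<in> acarr (path_alg (brauerQ n)). brauer_coord n x = (\<lambda>b. 0 :: 'k)}"
    unfolding brauer_ideal_def
  proof (rule gen_ideal_least[OF kernel_ideal], rule subsetI)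
    fix r :: "_ \<Rightarrow> 'k" assume "r \<in> brauer_rels n"
    then show "r \<in> {x \<in> acarr (path_alg (brauerQ n)). brauer_coord n x = (\<lambda>b. 0 :: 'k)}"
      using brauer_rels_in_kernel[OF n] by (simp only: mem_Collect_eq)
  qed
  then show ?thesis
    using assms by (simp add: subset_iff)
qed

end

definition is_two_cycle :: "barr \<Rightarrow> barr \<Rightarrow> bool" where
  "is_two_cycle a b \<longleftrightarrow> (\<exists>i. a = BA i \<and> b = BB i) \<or> (\<exists>i. a = BB i \<and> b = BA i)"

context
  fixes n :: nat
  assumes n: "1 \<le> n"
begin

lemma brauer_zero_rel_in_ideal:
  assumes "n \<noteq> 1" "is_path (brauerQ n) (v, [a, b])" "\<not> is_two_cycle a b"
  shows "(pth (v, [a, b]) :: _ \<Rightarrow> 'k::field) \<in> brauer_ideal n"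
proof -
  have "pth (v, [a, b]) \<in> brauer_rels n"
    using assms by (cases a; cases b) (auto simp: is_path_brauerQ_Cons is_two_cycle_def brauer_rels_def)
  then show ?thesis
    by (rule brauer_rel_in_ideal[OF n])
qed

lemma brauer_alpha_beta_alpha_in_ideal:
  assumes "n \<noteq> 1" "i \<in> {1..<n}"
  shows "(pth (i, [BA i, BB i, BA i]) :: _ \<Rightarrow> 'k::field) \<in> brauer_ideal n"
proof (cases "i = 1")
  case True
  then show ?thesis
    using assms by (intro brauer_rel_in_ideal[OF n]) (simp add: brauer_rels_def)
next
  case False
  define k where "k = i - 1"
  have k: "k \<in> {1..n - 2}" "i = Suc k"
    using False assms unfolding k_def by auto
  have "(\<lambda>p. pth (i, [BB k, BA k]) p - pth (i, [BA i, BB i]) p :: 'k) \<in> brauer_ideal n"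
    using k assms(1) by (intro brauer_rel_in_ideal[OF n]) (auto simp: brauer_rels_def)
  moreover have "(pth (i, [BB k] @ [BA k, BA i]) :: _ \<Rightarrow> 'k) \<in> brauer_ideal n"
    using k assms(1)
    by (intro pth_append_in_ideal[OF brauerQ_tgt_in_verts brauer_ideal_is_ideal[OF n]] disjI2
        brauer_zero_rel_in_ideal) (auto simp: is_path_brauerQ_Cons is_two_cycle_def)
  ultimately show ?thesis
    using pth_append_congruent[where 'k='k, OF brauerQ_tgt_in_verts brauer_ideal_is_ideal[OF n],
        of i "[BB k, BA k]" "[BA i, BB i]" "[BA i]"] k assms
    by (auto simp: is_path_brauerQ_Cons)
qed

lemma brauer_beta_alpha_beta_in_ideal:
  assumes "n \<noteq> 1" "i \<in> {1..<n}"
  shows "(pth (Suc i, [BB i, BA i, BB i]) :: _ \<Rightarrow> 'k::field) \<in> brauer_ideal n"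
proof (cases "Suc i = n")
  case True
  then show ?thesis
    using assms by (intro brauer_rel_in_ideal[OF n]) (auto simp: brauer_rels_def)
next
  case False
  then have i: "i \<in> {1..n - 2}"
    using assms by auto
  have "(\<lambda>p. pth (Suc i, [BB i, BA i]) p - pth (Suc i, [BA (Suc i), BB (Suc i)]) p :: 'k) \<in> brauer_ideal n"
    using i assms(1) by (intro brauer_rel_in_ideal[OF n]) (auto simp: brauer_rels_def)
  moreover have "(pth (Suc i, [BA (Suc i)] @ [BB (Suc i), BB i]) :: _ \<Rightarrow> 'k) \<in> brauer_ideal n"
    using i assms(1)
    by (intro pth_append_in_ideal[OF brauerQ_tgt_in_verts brauer_ideal_is_ideal[OF n]] disjI2
        brauer_zero_rel_in_ideal) (auto simp: is_path_brauerQ_Cons is_two_cycle_def)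
  ultimately show ?thesis
    using pth_append_congruent[where 'k='k, OF brauerQ_tgt_in_verts brauer_ideal_is_ideal[OF n],
        of "Suc i" "[BB i, BA i]" "[BA (Suc i), BB (Suc i)]" "[BB i]"] i assms
    by (auto simp: is_path_brauerQ_Cons)
qed

lemma brauer_length3_in_ideal:
  assumes p: "is_path (brauerQ n) (v, [a, b, c])"
  shows "(pth (v, [a, b, c]) :: _ \<Rightarrow> 'k::field) \<in> brauer_ideal n"
proof -
  note append = pth_append_in_ideal[where 'k='k, OF brauerQ_tgt_in_verts brauer_ideal_is_ideal[OF n]]
  have paths: "is_path (brauerQ n) (v, [a, b])" "is_path (brauerQ n) (tgt (brauerQ n) b, [c])"
    "is_path (brauerQ n) (v, [a])" "is_path (brauerQ n) (tgt (brauerQ n) a, [b, c])"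
    using p by (auto simp: is_path_brauerQ_Cons)
  consider (loop) "n = 1" | (ab) "n \<noteq> 1" "\<not> is_two_cycle a b" | (bc) "n \<noteq> 1" "\<not> is_two_cycle b c"
    | (aba) i where "n \<noteq> 1" "a = BA i" "b = BB i" "c = BA i"
    | (bab) i where "n \<noteq> 1" "a = BB i" "b = BA i" "c = BB i"
    by (auto simp: is_two_cycle_def)
  then show ?thesis
  proof cases
    case loop
    then have "v = 1" "a = BL" "b = BL"
      using p by (auto simp: is_path_brauerQ_Cons)
    moreover have "(pth (1, [BL, BL]) :: _ \<Rightarrow> 'k) \<in> brauer_ideal n"
      by (rule brauer_rel_in_ideal[OF n]) (simp add: brauer_rels_def loop)
    ultimately show ?thesis
      using append[of v "[a, b]" "[c]"] paths by simp
  next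
    case ab
    then have "(pth (v, [a, b]) :: _ \<Rightarrow> 'k) \<in> brauer_ideal n"
      using paths by (intro brauer_zero_rel_in_ideal)
    then show ?thesis
      using append[of v "[a, b]" "[c]"] paths by simp
  next
    case bc
    then have "(pth (tgt (brauerQ n) a, [b, c]) :: _ \<Rightarrow> 'k) \<in> brauer_ideal n"
      using paths by (intro brauer_zero_rel_in_ideal)
    then show ?thesis
      using append[of v "[a]" "[b, c]"] paths by simp
  next
    case aba
    then show ?thesis
      using p brauer_alpha_beta_alpha_in_ideal[where 'k='k] by (auto simp: is_path_brauerQ_Cons)
  next
    case bab
    then show ?thesis
      using p brauer_beta_alpha_beta_in_ideal[where 'k='k] by (auto simp: is_path_brauerQ_Cons)
  qed
qed

lemma brauer_long_path_in_ideal: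
  assumes p: "is_path (brauerQ n) (v, a # b # c # rest)"
  shows "(pth (v, a # b # c # rest) :: _ \<Rightarrow> 'k::field) \<in> brauer_ideal n"
proof -
  have "is_path (brauerQ n) (v, [a, b, c])" "is_path (brauerQ n) (pend (brauerQ n) (v, [a, b, c]), rest)"
    using is_path_appendD[OF brauerQ_tgt_in_verts, where v = v and xs = "[a, b, c]" and ys = rest] p by simp_all
  then show ?thesis
    using pth_append_in_ideal[where 'k='k, OF brauerQ_tgt_in_verts brauer_ideal_is_ideal[OF n],
        of v "[a, b, c]" rest] brauer_length3_in_ideal[where 'k='k, of v a b c] by simp
qed

end

context
  fixes n :: nat
  assumes n: "1 \<le> n"
begin

lemma brauer_two_path_cases:
  assumes p: "is_path (brauerQ n) (v, [a, b])"
  shows "(v, [a, b]) \<in> brauer_bpath n ` brauer_basis n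
    \<or> (\<exists>i\<in>{1..n - 2}. n \<noteq> 1 \<and> (v, [a, b]) = (Suc i, [BB i, BA i]))
    \<or> ((pth (v, [a, b]) :: _ \<Rightarrow> 'k::field) \<in> brauer_ideal n
        \<and> brauer_coord n (pth (v, [a, b]) :: _ \<Rightarrow> 'k) = (\<lambda>c. 0))"
proof (cases "n = 1 \<or> \<not> is_two_cycle a b")
  case True
  have "(pth (v, [a, b]) :: _ \<Rightarrow> 'k) \<in> brauer_ideal n"
  proof (cases "n = 1")
    case True
    then show ?thesis
      using p by (intro brauer_rel_in_ideal[OF n]) (auto simp: brauer_rels_def is_path_brauerQ_Cons)
  qed (use True p brauer_zero_rel_in_ideal[OF n] in blast)
  moreover have "brauer_coord n (pth (v, [a, b]) :: _ \<Rightarrow> 'k) c = 0" for c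
    using True p by (cases c) (auto simp: brauer_coord_def pth_def is_two_cycle_def is_path_brauerQ_Cons)
  ultimately show ?thesis
    by auto
next
  case False
  then consider i where "a = BA i" "b = BB i" | i where "a = BB i" "b = BA i"
    by (auto simp: is_two_cycle_def)
  then show ?thesis
  proof cases
    case (1 i)
    then have "(v, [a, b]) = brauer_bpath n (Soc i)" "Soc i \<in> brauer_basis n"
      using p False by (auto simp: brauer_bpath_def is_path_brauerQ_Cons)
    then show ?thesis by blast
  next
    case (2 i)
    then have "v = Suc i" "i \<in> {1..<n}"
      using p False by (auto simp: is_path_brauerQ_Cons)
    then have "(v, [a, b]) = brauer_bpath n (Soc n) \<and> Soc n \<in> brauer_basis n
        \<or> (i \<in> {1..n - 2} \<and> n \<noteq> 1 \<and> (v, [a, b]) = (Suc i, [BB i, BA i]))"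
      using 2 False n by (cases "Suc i = n") (auto simp: brauer_bpath_def)
    then show ?thesis by blast
  qed
qed

lemma brauer_path_cases:
  assumes p: "is_path (brauerQ n) p"
  shows "p \<in> brauer_bpath n ` brauer_basis n
    \<or> (\<exists>i\<in>{1..n - 2}. n \<noteq> 1 \<and> p = (Suc i, [BB i, BA i]))
    \<or> ((pth p :: _ \<Rightarrow> 'k::field) \<in> brauer_ideal n \<and> brauer_coord n (pth p :: _ \<Rightarrow> 'k) = (\<lambda>c. 0))"
proof -
  obtain v xs where p_eq: "p = (v, xs)"
    by (cases p)
  consider "xs = []" | a where "xs = [a]" | a b where "xs = [a, b]" | a b c rest where "xs = a # b # c # rest"
    by (metis list.exhaust)
  then show ?thesis
  proof cases
    case 1
    then have "p = brauer_bpath n (Idem v)" "Idem v \<in> brauer_basis n"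
      using p p_eq by (auto simp: brauer_bpath_def is_path_def)
    then show ?thesis by blast
  next
    case (2 a)
    have "\<exists>b\<in>brauer_basis n. p = brauer_bpath n b"
    proof (cases a)
      case (BA i)
      then show ?thesis
        using p p_eq 2 by (intro bexI[of _ "Alpha i"]) (auto simp: brauer_bpath_def is_path_brauerQ_Cons)
    next
      case (BB i)
      then show ?thesis
        using p p_eq 2 by (intro bexI[of _ "Beta i"]) (auto simp: brauer_bpath_def is_path_brauerQ_Cons)
    next
      case BL
      then show ?thesis
        using p p_eq 2 by (intro bexI[of _ "Soc 1"])
          (auto simp: brauer_bpath_def is_path_brauerQ_Cons split: if_splits)
    qed
    then show ?thesis by blast
  next
    case (3 a b)
    then show ?thesis
      using brauer_two_path_cases p p_eq by simp
  next
    case (4 a b c rest)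
    have "brauer_coord n (pth p :: _ \<Rightarrow> 'k) d = 0" for d
      using p_eq 4 by (cases d) (simp_all add: brauer_coord_def pth_def)
    then show ?thesis
      using brauer_long_path_in_ideal[OF n] p p_eq 4 by auto
  qed
qed

end

theorem quot_brauer_iso:
  assumes n: "1 \<le> n"
  shows "alg_iso (brauer_line n :: ('k::field, _) kalg) (brauer_alg n) (\<lambda>X. brauer_coord n (qrep X))"
    and "ops_closed (brauer_line n :: ('k::field, _) kalg)"
proof -
  interpret path_coordinates "brauerQ n" "brauer_basis n" "brauer_bpath n"
    "brauer_coord n :: (_ \<Rightarrow> 'k) \<Rightarrow> _" "brauer_mul n" "brauer_one n"
    by (rule brauer_coordinates)
  note J = brauer_ideal_is_ideal[OF n, where 'k='k]
  have reduce: "(\<lambda>q. pth p q - lift (brauer_coord n (pth p)) q) \<in> brauer_ideal n"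
    if p: "is_path (brauerQ n) p" for p
  proof -
    consider (basis) "p \<in> brauer_bpath n ` brauer_basis n"
      | (comm) i where "i \<in> {1..n - 2}" "n \<noteq> 1" "p = (Suc i, [BB i, BA i])"
      | (zero) "(pth p :: _ \<Rightarrow> 'k) \<in> brauer_ideal n" "brauer_coord n (pth p :: _ \<Rightarrow> 'k) = (\<lambda>c. 0)"
      using brauer_path_cases[OF n p, where 'k='k] by blast
    then show ?thesis
    proof cases
      case basis
      then show ?thesis
        using lift_coord_pth path_ideal_zero[OF J] by auto
    next
      case (comm i)
      have "Suc i < n"
        using comm(1) by auto
      then have bpath: "brauer_bpath n (Soc (Suc i)) = (Suc i, [BA (Suc i), BB (Suc i)])"
        using comm by (simp add: brauer_bpath_def)
      have "brauer_coord n (pth p :: _ \<Rightarrow> 'k) c = brauer_coord n (pth (brauer_bpath n (Soc (Suc i)))) c" for c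
        unfolding bpath comm(3) using comm by (cases c) (auto simp: brauer_coord_def pth_def)
      then have "brauer_coord n (pth p :: _ \<Rightarrow> 'k) = brauer_coord n (pth (brauer_bpath n (Soc (Suc i))))"
        by (rule ext)
      then have "lift (brauer_coord n (pth p)) = pth (Suc i, [BA (Suc i), BB (Suc i)])"
        using lift_coord_pth[of "Soc (Suc i)"] \<open>Suc i < n\<close> bpath by simp
      moreover have "(\<lambda>q. pth p q - pth (Suc i, [BA (Suc i), BB (Suc i)]) q :: 'k) \<in> brauer_ideal n"
        using comm by (intro brauer_rel_in_ideal[OF n]) (auto simp: brauer_rels_def)
      ultimately show ?thesis
        by simp
    next
      case zero
      then show ?thesis
        by (simp add: lift_zero)
    qed
  qed
  have "brauer_line n = quot_alg (path_alg (brauerQ n)) (brauer_ideal n :: (_ \<Rightarrow> 'k) set)"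
    by (simp add: brauer_line_def brauer_ideal_def)
  then show "alg_iso (brauer_line n :: ('k::field, _) kalg) (brauer_alg n) (\<lambda>X. brauer_coord n (qrep X))"
    and "ops_closed (brauer_line n :: ('k::field, _) kalg)"
    using quot_coord_iso[OF J brauer_ideal_kernel[OF n] reduce] by simp_all
qed

subsection \<open>The trivial extension of A\<close>

abbreviation line_unit :: "nat \<Rightarrow> line_idx \<Rightarrow> line_idx \<Rightarrow> 'k::field" where
  "line_unit n \<equiv> coord_unit (line_basis n)"

text \<open>T(A) has the basis of A together with the dual basis of DA. An arrow of A pointing
  i \<rightarrow> i+1 becomes alpha_i and its dual becomes beta_i, an arrow pointing i+1 \<rightarrow> i becomes
  beta_i and its dual alpha_i, and the dual of the idempotent at i becomes the socle element at i.\<close>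

definition theta ::
  "nat \<Rightarrow> (nat \<Rightarrow> bool) \<Rightarrow> (line_idx \<Rightarrow> 'k::field) \<times> ((line_idx \<Rightarrow> 'k) \<Rightarrow> 'k) \<Rightarrow> brauer_idx \<Rightarrow> 'k"
where
  "theta n ori = (\<lambda>(c, f) b. if b \<in> brauer_basis n then (case b of
       Idem i \<Rightarrow> c (Vert i)
     | Soc i \<Rightarrow> f (line_unit n (Vert i))
     | Alpha j \<Rightarrow> if ori j then c (Arr j) else f (line_unit n (Arr j))
     | Beta j \<Rightarrow> if ori j then f (line_unit n (Arr j)) else c (Arr j))
     else 0)"

definition theta_inv ::
  "nat \<Rightarrow> (nat \<Rightarrow> bool) \<Rightarrow> (brauer_idx \<Rightarrow> 'k::field) \<Rightarrow> (line_idx \<Rightarrow> 'k) \<times> ((line_idx \<Rightarrow> 'k) \<Rightarrow> 'k)"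
where
  "theta_inv n ori v =
    ((\<lambda>b. if b \<in> line_basis n then (case b of
        Vert i \<Rightarrow> v (Idem i) | Arr j \<Rightarrow> if ori j then v (Alpha j) else v (Beta j)) else 0),
     coord_functional (line_basis n) (\<lambda>b. case b of
        Vert i \<Rightarrow> v (Soc i) | Arr j \<Rightarrow> if ori j then v (Beta j) else v (Alpha j)))"

context
  fixes n :: nat and ori :: "nat \<Rightarrow> bool" and c :: "line_idx \<Rightarrow> 'k::field" and f :: "(line_idx \<Rightarrow> 'k) \<Rightarrow> 'k"
  assumes c: "c \<in> vcarr (line_basis n)" and f: "f \<in> kdual (line_alg n ori)"
begin

lemma kdual_line_unit_outside: "b \<notin> line_basis n \<Longrightarrow> f (line_unit n b) = 0"
  using kdual_coord_smul[OF f, of "\<lambda>b. 0" 0] by (simp add: coord_unit_def vcarr_def)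

lemma theta_Idem: "theta n ori (c, f) (Idem i) = c (Vert i)"
  and theta_Soc: "theta n ori (c, f) (Soc i) = f (line_unit n (Vert i))"
  and theta_Alpha: "theta n ori (c, f) (Alpha j) = (if ori j then c (Arr j) else f (line_unit n (Arr j)))"
  and theta_Beta: "theta n ori (c, f) (Beta j) = (if ori j then f (line_unit n (Arr j)) else c (Arr j))"
  using c kdual_line_unit_outside by (auto simp: theta_def vcarr_def)

end

lemma theta_bij:
  "bij_betw (theta n ori :: _ \<Rightarrow> _ \<Rightarrow> 'k::field) (acarr (triv_ext (line_alg n ori))) (vcarr (brauer_basis n))"
  unfolding triv_ext_simps coord_alg_simps
proof (rule bij_betw_byWitness[where f' = "theta_inv n ori"])
  show "\<forall>x\<in>vcarr (line_basis n) \<times> kdual (line_alg n ori). theta_inv n ori (theta n ori x) = (x :: _ \<times> (_ \<Rightarrow> 'k))"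
  proof (clarify)
    fix c :: "line_idx \<Rightarrow> 'k" and f :: "(line_idx \<Rightarrow> 'k) \<Rightarrow> 'k"
    assume cf: "c \<in> vcarr (line_basis n)" "f \<in> kdual (line_alg n ori)"
    have "fst (theta_inv n ori (theta n ori (c, f))) b = c b" for b
      using cf(1) by (cases b) (auto simp: theta_inv_def theta_Idem[OF cf] theta_Alpha[OF cf]
          theta_Beta[OF cf] vcarr_def)
    moreover have "snd (theta_inv n ori (theta n ori (c, f))) x = f x" for x
    proof (cases "x \<in> vcarr (line_basis n)")
      case True
      have "(case b of Vert i \<Rightarrow> theta n ori (c, f) (Soc i) | Arr j \<Rightarrow> if ori j then theta n ori (c, f) (Beta j)
          else theta n ori (c, f) (Alpha j)) = f (line_unit n b)" for b
        by (cases b) (simp_all add: theta_Soc[OF cf] theta_Alpha[OF cf] theta_Beta[OF cf])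
      then show ?thesis
        using True kdual_coord_expansion[OF cf(2) _ True]
        by (simp add: theta_inv_def coord_functional_def line_basis_def)
    qed (simp add: theta_inv_def coord_functional_def kdual_coord_outside[OF cf(2)])
    ultimately show "theta_inv n ori (theta n ori (c, f)) = (c, f)"
      by (simp add: prod_eq_iff fun_eq_iff)
  qed
  show "\<forall>v\<in>vcarr (brauer_basis n). theta n ori (theta_inv n ori v) = (v :: _ \<Rightarrow> 'k)"
  proof
    fix v :: "_ \<Rightarrow> 'k" assume v: "v \<in> vcarr (brauer_basis n)"
    have "theta n ori (theta_inv n ori v) b = v b" for b
      using v by (cases b) (auto simp: theta_def theta_inv_def coord_functional_unit line_basis_def vcarr_def)
    then show "theta n ori (theta_inv n ori v) = v" ..
  qed
  show "theta n ori ` (vcarr (line_basis n) \<times> kdual (line_alg n ori)) \<subseteq> vcarr (brauer_basis n)"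
    by (auto simp: theta_def vcarr_def)
  show "theta_inv n ori ` vcarr (brauer_basis n) \<subseteq> vcarr (line_basis n) \<times> kdual (line_alg n ori :: ('k, _) kalg)"
    using coord_functional_kdual by (auto simp: theta_inv_def vcarr_def)
qed

lemma line_mul_unit_Vert:
  assumes i: "i \<in> {1..n}" and c: "c \<in> vcarr (line_basis n)"
  shows "line_mul n ori (line_unit n (Vert i)) c = (\<lambda>b. c (Vert i) * line_unit n (Vert i) b
      + (if ori i then c (Arr i) else 0) * line_unit n (Arr i) b
      + (if ori (i - 1) then 0 else c (Arr (i - 1))) * line_unit n (Arr (i - 1)) b)"
    and "line_mul n ori c (line_unit n (Vert i)) = (\<lambda>b. c (Vert i) * line_unit n (Vert i) b
      + (if ori i then 0 else c (Arr i)) * line_unit n (Arr i) b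
      + (if ori (i - 1) then c (Arr (i - 1)) else 0) * line_unit n (Arr (i - 1)) b)"
  using i c by (auto simp: line_mul_def coord_unit_def vcarr_def fun_eq_iff split: line_idx.split)

lemma line_mul_unit_Arr:
  assumes "j \<in> {1..<n}"
  shows "line_mul n ori (line_unit n (Arr j)) c =
      (\<lambda>b. c (Vert (tgt (lineQ n ori) j)) * line_unit n (Arr j) b)"
    and "line_mul n ori d (line_unit n (Arr j)) =
      (\<lambda>b. d (Vert (src (lineQ n ori) j)) * line_unit n (Arr j) b)"
  using assms by (auto simp: line_mul_def coord_unit_def fun_eq_iff split: line_idx.split)

lemma kdual_line_mul_unit_Vert:
  assumes i: "i \<in> {1..n}" and c: "c \<in> vcarr (line_basis n)" and f: "f \<in> kdual (line_alg n ori)"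
  shows "f (line_mul n ori (line_unit n (Vert i)) c) = c (Vert i) * f (line_unit n (Vert i))
      + (if ori i then c (Arr i) else 0) * f (line_unit n (Arr i))
      + (if ori (i - 1) then 0 else c (Arr (i - 1))) * f (line_unit n (Arr (i - 1)))"
    and "f (line_mul n ori c (line_unit n (Vert i))) = c (Vert i) * f (line_unit n (Vert i))
      + (if ori i then 0 else c (Arr i)) * f (line_unit n (Arr i))
      + (if ori (i - 1) then c (Arr (i - 1)) else 0) * f (line_unit n (Arr (i - 1)))"
  unfolding line_mul_unit_Vert[OF i c]
  by (rule kdual_coord_comb3[OF f coord_unit_vcarr coord_unit_vcarr coord_unit_vcarr])+

lemma theta_mul:
  assumes x: "x \<in> acarr (triv_ext (line_alg n ori))" and y: "y \<in> acarr (triv_ext (line_alg n ori))"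
  shows "theta n ori (amul (triv_ext (line_alg n ori)) x y) =
    brauer_mul n (theta n ori x) (theta n ori (y :: _ \<times> (_ \<Rightarrow> 'k::field)))"
proof
  fix b
  obtain c f d g where xy: "x = (c, f)" "y = (d, g)"
    by (cases x, cases y)
  have cf: "c \<in> vcarr (line_basis n)" "f \<in> kdual (line_alg n ori)"
    and dg: "d \<in> vcarr (line_basis n)" "g \<in> kdual (line_alg n ori)"
    using x y xy by (simp_all add: triv_ext_simps)
  let ?h = "\<lambda>z. if z \<in> vcarr (line_basis n) then g (line_mul n ori z c) + f (line_mul n ori d z) else 0"
  have prod: "amul (triv_ext (line_alg n ori)) (c, f) (d, g) = (line_mul n ori c d, ?h)"
    unfolding triv_ext_simps coord_alg_simps ..
  note theta_vals = theta_Idem[OF cf] theta_Idem[OF dg] theta_Soc[OF cf] theta_Soc[OF dg]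
    theta_Alpha[OF cf] theta_Alpha[OF dg] theta_Beta[OF cf] theta_Beta[OF dg]
  show "theta n ori (amul (triv_ext (line_alg n ori)) x y) b =
      brauer_mul n (theta n ori x) (theta n ori y) b"
  proof (cases "b \<in> brauer_basis n")
    case True
    then show ?thesis
    proof (cases b)
      case (Idem i)
      then show ?thesis
        using True cf dg by (simp add: prod xy theta_def brauer_mul_def line_mul_def theta_vals)
    next
      case (Soc i)
      then have i: "i \<in> {1..n}"
        using True by simp
      have "theta n ori (amul (triv_ext (line_alg n ori)) x y) b =
          g (line_mul n ori (line_unit n (Vert i)) c) + f (line_mul n ori d (line_unit n (Vert i)))"
        using True Soc by (simp add: xy prod theta_def coord_unit_vcarr)
      then show ?thesis
        using True Soc by (simp add: xy brauer_mul_def theta_vals algebra_simps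
            kdual_line_mul_unit_Vert(1)[OF i cf(1) dg(2)] kdual_line_mul_unit_Vert(2)[OF i dg(1) cf(2)])
    next
      case (Alpha j)
      then have j: "j \<in> {1..<n}"
        using True by simp
      show ?thesis
      proof (cases "ori j")
        case False
        have "theta n ori (amul (triv_ext (line_alg n ori)) x y) b =
            g (line_mul n ori (line_unit n (Arr j)) c) + f (line_mul n ori d (line_unit n (Arr j)))"
          using True Alpha False by (simp add: xy prod theta_def coord_unit_vcarr)
        then show ?thesis
          using True Alpha False unfolding line_mul_unit_Arr[OF j]
          by (simp add: xy brauer_mul_def theta_vals kdual_coord_smul[OF cf(2) coord_unit_vcarr]
              kdual_coord_smul[OF dg(2) coord_unit_vcarr] algebra_simps)
      qed (use True Alpha in \<open>simp add: xy prod theta_def brauer_mul_def line_mul_def theta_vals\<close>)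
    next
      case (Beta j)
      then have j: "j \<in> {1..<n}"
        using True by simp
      show ?thesis
      proof (cases "ori j")
        case True
        have "theta n ori (amul (triv_ext (line_alg n ori)) x y) b =
            g (line_mul n ori (line_unit n (Arr j)) c) + f (line_mul n ori d (line_unit n (Arr j)))"
          using \<open>b \<in> brauer_basis n\<close> Beta True by (simp add: xy prod theta_def coord_unit_vcarr)
        then show ?thesis
          using \<open>b \<in> brauer_basis n\<close> Beta True unfolding line_mul_unit_Arr[OF j]
          by (simp add: xy brauer_mul_def theta_vals kdual_coord_smul[OF cf(2) coord_unit_vcarr]
              kdual_coord_smul[OF dg(2) coord_unit_vcarr] algebra_simps)
      qed (use True Beta in \<open>simp add: xy prod theta_def brauer_mul_def line_mul_def theta_vals\<close>)
    qed
  qed (simp add: prod xy theta_def brauer_mul_def)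
qed

lemma theta_iso: "alg_iso (triv_ext (line_alg n ori)) (brauer_alg n) (theta n ori :: _ \<Rightarrow> _ \<Rightarrow> 'k::field)"
  unfolding alg_iso_def
proof (intro conjI ballI allI)
  show "bij_betw (theta n ori :: _ \<Rightarrow> _ \<Rightarrow> 'k) (acarr (triv_ext (line_alg n ori))) (acarr (brauer_alg n))"
    using theta_bij by simp
next
  fix x y :: "(line_idx \<Rightarrow> 'k) \<times> ((line_idx \<Rightarrow> 'k) \<Rightarrow> 'k)"
  assume "x \<in> acarr (triv_ext (line_alg n ori))" "y \<in> acarr (triv_ext (line_alg n ori))"
  then show "theta n ori (amul (triv_ext (line_alg n ori)) x y) =
      amul (brauer_alg n) (theta n ori x) (theta n ori y)"
    using theta_mul by simp
  show "theta n ori (aadd (triv_ext (line_alg n ori)) x y) =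
      aadd (brauer_alg n) (theta n ori x) (theta n ori y)"
    by (cases x, cases y) (auto simp: triv_ext_simps theta_def fun_eq_iff split: brauer_idx.split)
next
  fix c and x :: "(line_idx \<Rightarrow> 'k) \<times> ((line_idx \<Rightarrow> 'k) \<Rightarrow> 'k)"
  show "theta n ori (asmul (triv_ext (line_alg n ori)) c x) = asmul (brauer_alg n) c (theta n ori x)"
    by (cases x) (auto simp: triv_ext_simps theta_def fun_eq_iff split: brauer_idx.split)
next
  show "theta n ori (aone (triv_ext (line_alg n ori))) = (aone (brauer_alg n) :: _ \<Rightarrow> 'k)"
    by (auto simp: triv_ext_simps theta_def line_one_def brauer_one_def fun_eq_iff split: brauer_idx.split)
qed

theorem lemma3p8:
  fixes n :: nat and orient :: "nat \<Rightarrow> bool"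
    and I :: "(nat \<times> nat list \<Rightarrow> 'k::field) set"
  assumes "alg_closed TYPE('k)"
    and "n \<ge> 1"
    and "gentle (lineQ n orient) I"
    and "rad_sq_zero (quot_alg (path_alg (lineQ n orient)) I)"
  shows "alg_isomorphic (triv_ext (quot_alg (path_alg (lineQ n orient)) I))
           (brauer_line n :: ('k, (nat \<times> barr list \<Rightarrow> 'k) set) kalg)"
proof -
  let ?A = "quot_alg (path_alg (lineQ n orient)) I"
  obtain \<phi> where "alg_iso (triv_ext ?A) (triv_ext (line_alg n orient)) \<phi>"
    using triv_ext_iso[OF quot_line_iso[OF assms(3,4)]] by blast
  moreover have "alg_iso (triv_ext (line_alg n orient)) (brauer_alg n) (theta n orient)"
    by (rule theta_iso)
  moreover obtain \<psi> where "alg_iso (brauer_alg n) (brauer_line n :: ('k, _) kalg) \<psi>"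
    using alg_iso_inv[OF quot_brauer_iso[OF assms(2)]] by blast
  ultimately show ?thesis
    unfolding alg_isomorphic_def by (blast intro: alg_iso_comp)
qed

end
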